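(* Let $s:\mathcal{X}\times\mathcal{Y}\to\mathbb{R}$ be a fixed measurable nonconformity score, $S_1,\dots,S_d$ probability distributions on $\mathcal{X}\times\mathcal{Y}$, $f$ a function as described in the context, $\rho>0$ and $\alpha\in(0,1)$. For each $i\in[d]$ let $(X_{ij},Y_{ij})_{j=1}^{m_i}$ be i.i.d. from $S_i$, set $V_{ij}=s(X_{ij},Y_{ij})$ (so $V_{ij}\sim s\#S_i$ i.i.d.), let $\hat F_i(x)=\frac{1}{m_i}\sum_{j=1}^{m_i}\mathbb{I}_{(-\infty,x]}(V_{ij})$ and $\hat F_{\min}(x)=\min_{1\le i\le d}\hat F_i(x)$. Let $(X_{n+1},Y_{n+1})$ be such that $V_{n+1}=s(X_{n+1},Y_{n+1})\sim P$ for some $P\in\mathcal{P}_{f,\rho}$, with $V_{n+1}$ independent of $\{V_{ij}\}$. Let $\rho^\star\coloneqq\inf_{P_0\in\mathcal{CH}(s\#S_1,\dots,s\#S_d)}D_f(P\Vert P_0)$ (so $\rho^\star\le\rho$). Set $t\coloneqq\mathcal{Q}\left(g_{f,\rho}^{-1}(1-\alpha);\hat F_{\min}\right)$ and $\widetilde{\mathcal{C}}(x)\coloneqq\{y\in\mathcal{Y}: s(x,y)\le t\}$. Then for any $\epsilon>0$, $$\mathbb{P}\left(Y_{n+1}\in\widetilde{\mathcal{C}}(X_{n+1})\right)\ge\left(1-2\sum_{i=1}^de^{-2m_i\epsilon^2}\right)g_{f,\rho^\star}\left(g_{f,\rho}^{-1}(1-\alpha)-\epsilon\right),$$ where the probability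 is over the source samples and $(X_{n+1},Y_{n+1})$.
   Context: $f:\mathbb{R}\to\mathbb{R}\cup\{+\infty\}$ is a closed convex function with $f(1)=0$ and $f(t)=+\infty$ for $t<0$; for $P\ll Q$, $D_f(P\Vert Q)\coloneqq\int f\left(\frac{dP}{dQ}\right)dQ$. $\mathcal{CH}(P_1,\dots,P_d)\coloneqq\{\sum_i\lambda_iP_i:\lambda_i\ge0,\sum_i\lambda_i=1\}$; $s\#T$ is the push-forward $(s\#T)(A)=T(s^{-1}(A))$. $\mathcal{P}_{f,\rho}\coloneqq\{S\text{ a distribution on }\mathbb{R}:\exists S_0\in\mathcal{CH}(s\#S_1,\dots,s\#S_d),\ D_f(S\Vert S_0)\le\rho\}$. For $r\ge0$, $g_{f,r}(\beta)\coloneqq\inf\{z\in[0,1]:\beta f(z/\beta)+(1-\beta)f((1-z)/(1-\beta))\le r\}$ for $\beta\in[0,1]$, and $g_{f,r}^{-1}(\tau)\coloneqq\sup\{\beta\in[0,1]:g_{f,r}(\beta)\le\tau\}$. For a c.d.f. $F$, $\mathcal{Q}(\beta;F)\coloneqq\inf\{q:F(q)\ge\beta\}$. *)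

theory Defs
  imports "HOL-Probability.Probability"
begin

text \<open>Generator f: R -> R \<union> {+\<infinity>}, modelled as ereal-valued never equal to -\<infinity>.\<close>

definition ext_convex :: "(real \<Rightarrow> ereal) \<Rightarrow> bool" where
  "ext_convex f \<longleftrightarrow> (\<forall>x y t. 0 \<le> t \<and> t \<le> 1 \<longrightarrow>
      f ((1 - t) * x + t * y) \<le> ereal (1 - t) * f x + ereal t * f y)"

text \<open>Closed = lower semicontinuous = closed epigraph.\<close>
definition ext_closed :: "(real \<Rightarrow> ereal) \<Rightarrow> bool" where
  "ext_closed f \<longleftrightarrow> closed {p :: real \<times> real. f (fst p) \<le> ereal (snd p)}"

definition fdiv_generator :: "(real \<Rightarrow> ereal) \<Rightarrow> bool" where
  "fdiv_generator f \<longleftrightarrow> (\<forall>x. f x \<noteq> -\<infinity>) \<and> ext_convex f \<and> ext_closed f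
      \<and> f 1 = 0 \<and> (\<forall>t<0. f t = \<infinity>)"

definition fdiv :: "(real \<Rightarrow> ereal) \<Rightarrow> 'a measure \<Rightarrow> 'a measure \<Rightarrow> ereal" where
  "fdiv f P Q = (if absolutely_continuous Q P \<and> sets P = sets Q then
      (let r = (\<lambda>x. enn2real (RN_deriv Q P x)) in
        enn2ereal (\<integral>\<^sup>+ x. e2ennreal (f (r x)) \<partial>Q) - enn2ereal (\<integral>\<^sup>+ x. e2ennreal (- f (r x)) \<partial>Q))
     else \<infinity>)"

definition mixture :: "nat \<Rightarrow> (nat \<Rightarrow> real) \<Rightarrow> (nat \<Rightarrow> real measure) \<Rightarrow> real measure" where
  "mixture d lam Ms = measure_of UNIV (sets borel)
      (\<lambda>A. \<Sum>i<d. ennreal (lam i) * emeasure (Ms i) A)"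

definition convex_hull_meas :: "nat \<Rightarrow> (nat \<Rightarrow> real measure) \<Rightarrow> real measure set" where
  "convex_hull_meas d Ms = {mixture d lam Ms | lam. (\<forall>i<d. 0 \<le> lam i) \<and> (\<Sum>i<d. lam i) = 1}"

definition ambiguity_set :: "(real \<Rightarrow> ereal) \<Rightarrow> real \<Rightarrow> nat \<Rightarrow> (nat \<Rightarrow> real measure) \<Rightarrow> real measure set" where
  "ambiguity_set f \<rho> d Ms = {S. prob_space S \<and> sets S = sets borel \<and>
      (\<exists>S0\<in>convex_hull_meas d Ms. fdiv f S S0 \<le> ereal \<rho>)}"

text \<open>Recession slope f'(\<infinity>) and the perspective b f(z/b), with 0 f(z/0) = z f'(\<infinity>) (and 0 at z = 0).\<close>
definition recession :: "(real \<Rightarrow> ereal) \<Rightarrow> ereal" where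
  "recession f = (SUP t\<in>{0<..}. f (1 + t) / ereal t)"

definition persp :: "(real \<Rightarrow> ereal) \<Rightarrow> real \<Rightarrow> real \<Rightarrow> ereal" where
  "persp f b z = (if b > 0 then ereal b * f (z / b)
                  else if z = 0 then 0 else ereal z * recession f)"

text \<open>g_{f,r}; for beta < 0 (outside the paper's domain) we use the convention g = 0 = g(0).\<close>
definition g_fun :: "(real \<Rightarrow> ereal) \<Rightarrow> real \<Rightarrow> real \<Rightarrow> real" where
  "g_fun f r \<beta> = (if \<beta> < 0 then 0 else
      Inf {z\<in>{0..1}. persp f \<beta> z + persp f (1 - \<beta>) (1 - z) \<le> ereal r})"

definition g_inv :: "(real \<Rightarrow> ereal) \<Rightarrow> real \<Rightarrow> real \<Rightarrow> real" where
  "g_inv f r \<tau> = Sup {\<beta>\<in>{0..1}. g_fun f r \<beta> \<le> \<tau>}"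

definition quantile :: "real \<Rightarrow> (real \<Rightarrow> real) \<Rightarrow> real" where
  "quantile \<beta> F = Inf {q. F q \<ge> \<beta>}"

definition conf_set :: "'y set \<Rightarrow> ('x \<times> 'y \<Rightarrow> real) \<Rightarrow> real \<Rightarrow> 'x \<Rightarrow> 'y set" where
  "conf_set Ys s t x = {y\<in>Ys. s (x, y) \<le> t}"

end

theory Submission
  imports Defs
begin

text \<open>
For a fixed threshold t the test mass P{V \<le> t} is controlled by the source distributions: if every
s#S_i puts mass at least \<beta>' on (-\<infinity>, t], so does every mixture P0 of them, and the
data-processing inequality for the partition {(-\<infinity>, t], (t, \<infinity>)} bounds the f-divergence between
Bernoulli(P{V \<le> t}) and Bernoulli(\<beta>') by D_f(P || P0). Taking the infimum over P0 gives
P{V \<le> t} \<ge> g_{f,\<rho>*}(\<beta>').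

With \<beta> = g_{f,\<rho>}^{-1}(1 - \<alpha>) and \<beta>' = \<beta> - \<epsilon>, pick for each source a point c_i at which its cdf
crosses \<beta>'. The empirical quantile t can only fall below c_i if at least a fraction \<beta> of the
i-th sample lies below c_i, whose probability is at most \<beta> - \<epsilon>; by Hoeffding's inequality and a
union bound, t \<ge> c_i for all i with probability at least 1 - \<Sum>_i exp(-2 m_i \<epsilon>^2). As the test
score is independent of the samples, conditioning on them gives the coverage bound; only the
one-sided Hoeffding bound is needed.
\<close>

section \<open>Generators of f-divergences\<close>

lemma fdiv_generatorD:
  assumes "fdiv_generator f"
  shows "f 1 = 0" "t < 0 \<Longrightarrow> f t = \<infinity>" "f t \<noteq> -\<infinity>"
  using assms unfolding fdiv_generator_def by auto

lemma fdiv_generator_finiteE: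
  assumes "fdiv_generator f" and "f t < \<infinity>"
  obtains y where "f t = ereal y"
  using assms fdiv_generatorD(3)[OF assms(1), of t] by (cases "f t") auto

lemma ereal_real_of_ereal_fdiv_generator:
  assumes "fdiv_generator f" and "f t < \<infinity>"
  shows "ereal (real_of_ereal (f t)) = f t"
  by (rule fdiv_generator_finiteE[OF assms]) simp

lemma fdiv_generator_convex:
  assumes f: "fdiv_generator f" and x: "f x < \<infinity>" and y: "f y < \<infinity>" and t: "0 \<le> t" "t \<le> 1"
  shows "f ((1 - t) * x + t * y) < \<infinity>"
    and "real_of_ereal (f ((1 - t) * x + t * y)) \<le> (1 - t) * real_of_ereal (f x) + t * real_of_ereal (f y)"
proof -
  obtain a b where a: "f x = ereal a" and b: "f y = ereal b"
    using fdiv_generator_finiteE[OF f x] fdiv_generator_finiteE[OF f y] by metis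
  have "f ((1 - t) * x + t * y) \<le> ereal (1 - t) * f x + ereal t * f y"
    using f t unfolding fdiv_generator_def ext_convex_def by blast
  then have le: "f ((1 - t) * x + t * y) \<le> ereal ((1 - t) * a + t * b)"
    by (simp add: a b)
  show fin: "f ((1 - t) * x + t * y) < \<infinity>" by (rule le_less_trans[OF le]) simp
  obtain e where "f ((1 - t) * x + t * y) = ereal e" using fdiv_generator_finiteE[OF f fin] .
  then show "real_of_ereal (f ((1 - t) * x + t * y)) \<le> (1 - t) * real_of_ereal (f x) + t * real_of_ereal (f y)"
    using le by (simp add: a b)
qed

lemma fdiv_generator_slope_mono:
  assumes f: "fdiv_generator f" and u: "f u < \<infinity>" and v: "f v < \<infinity>" and uc: "u < c" and cv: "c < v"
  shows "f c < \<infinity>"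
    and "(real_of_ereal (f c) - real_of_ereal (f u)) / (c - u) \<le> (real_of_ereal (f v) - real_of_ereal (f c)) / (v - c)"
proof -
  define t where "t = (c - u) / (v - u)"
  have t: "0 \<le> t" "t \<le> 1" using uc cv by (auto simp: t_def field_simps)
  have tv: "t * (v - u) = c - u" using uc cv by (simp add: t_def)
  have c: "(1 - t) * u + t * v = c" using tv by (simp add: algebra_simps)
  show "f c < \<infinity>" using fdiv_generator_convex(1)[OF f u v t] by (simp add: c)
  let ?a = "real_of_ereal (f u)" and ?b = "real_of_ereal (f v)" and ?e = "real_of_ereal (f c)"
  have "?e \<le> (1 - t) * ?a + t * ?b" using fdiv_generator_convex(2)[OF f u v t] by (simp add: c)
  then have "(v - u) * ?e \<le> (v - u) * ((1 - t) * ?a + t * ?b)"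
    using uc cv by (intro mult_left_mono) auto
  also have "\<dots> = ((v - u) - t * (v - u)) * ?a + (t * (v - u)) * ?b"
    by (simp add: algebra_simps)
  also have "\<dots> = (v - c) * ?a + (c - u) * ?b"
    unfolding tv by simp
  finally have "(?e - ?a) * (v - c) \<le> (?b - ?e) * (c - u)"
    by (simp add: algebra_simps)
  then show "(?e - ?a) / (c - u) \<le> (?b - ?e) / (v - c)"
    using uc cv by (simp add: field_simps)
qed

lemma fdiv_generator_subgradient:
  assumes f: "fdiv_generator f" and u: "f u < \<infinity>" and v: "f v < \<infinity>" and uc: "u < c" and cv: "c < v"
  obtains k where "\<And>t. f t < \<infinity> \<Longrightarrow> real_of_ereal (f c) + k * (t - c) \<le> real_of_ereal (f t)"
proof -
  define slope where "slope w = (real_of_ereal (f c) - real_of_ereal (f w)) / (c - w)" for w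
  define L where "L = slope ` {w. f w < \<infinity> \<and> w < c}"
  have L_ne: "L \<noteq> {}" using u uc unfolding L_def by blast
  have L_le: "l \<le> (real_of_ereal (f y) - real_of_ereal (f c)) / (y - c)"
    if "l \<in> L" "f y < \<infinity>" "c < y" for l y
    using that fdiv_generator_slope_mono(2)[OF f] unfolding L_def slope_def by blast
  have bdd: "bdd_above L" using L_le[OF _ v cv] by (auto simp: bdd_above_def)
  show ?thesis
  proof (rule that[of "Sup L"])
    fix t assume ft: "f t < \<infinity>"
    consider "t < c" | "t = c" | "c < t" by linarith
    then show "real_of_ereal (f c) + Sup L * (t - c) \<le> real_of_ereal (f t)"
    proof cases
      case 1
      then have "slope t \<in> L" using ft unfolding L_def by blast
      then have "slope t \<le> Sup L" using bdd by (rule cSup_upper)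
      with 1 show ?thesis unfolding slope_def by (simp add: field_simps)
    next
      case 3
      then have "Sup L \<le> (real_of_ereal (f t) - real_of_ereal (f c)) / (t - c)"
        using L_ne L_le[OF _ ft] by (intro cSup_least) auto
      with 3 show ?thesis by (simp add: field_simps)
    qed simp
  qed
qed

lemma fdiv_generator_affine_minorant:
  assumes f: "fdiv_generator f"
  obtains c0 k0 where "\<And>t. f t < \<infinity> \<Longrightarrow> c0 + k0 * t \<le> real_of_ereal (f t)"
proof (cases "\<exists>u. f u < \<infinity> \<and> u \<noteq> 1")
  case True
  then obtain u where u: "f u < \<infinity>" "u \<noteq> 1" by blast
  have f1: "f 1 < \<infinity>" using fdiv_generatorD(1)[OF f] by simp
  define lo hi where "lo = min u 1" and "hi = max u 1"
  have lh: "f lo < \<infinity>" "f hi < \<infinity>" "lo < (lo + hi) / 2" "(lo + hi) / 2 < hi"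
    using u f1 by (auto simp: lo_def hi_def min_def max_def)
  obtain k where k: "\<And>t. f t < \<infinity> \<Longrightarrow>
      real_of_ereal (f ((lo + hi) / 2)) + k * (t - (lo + hi) / 2) \<le> real_of_ereal (f t)"
    using fdiv_generator_subgradient[OF f lh] by blast
  show ?thesis
  proof (rule that)
    fix t assume "f t < \<infinity>"
    from k[OF this] show "real_of_ereal (f ((lo + hi) / 2)) - k * ((lo + hi) / 2) + k * t \<le> real_of_ereal (f t)"
      by (simp add: algebra_simps)
  qed
next
  case False
  show ?thesis
  proof (rule that[of 0 0])
    fix t assume "f t < \<infinity>"
    with False have "t = 1" by blast
    then show "0 + 0 * t \<le> real_of_ereal (f t)" using fdiv_generatorD(1)[OF f] by simp
  qed
qed

lemma borel_measurable_fdiv_generator: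
  assumes f: "fdiv_generator f"
  shows "f \<in> borel_measurable borel"
proof (subst borel_measurable_ereal_iff_Ioi, intro allI)
  fix a :: ereal
  define epi where "epi = {p :: real \<times> real. f (fst p) \<le> ereal (snd p)}"
  have "closed epi" using f unfolding fdiv_generator_def ext_closed_def epi_def by blast
  have "open (f -` {a<..})"
  proof (cases a)
    case (real y)
    have "closed ((\<lambda>t. (t, y)) -` epi)"
      by (intro closed_vimage \<open>closed epi\<close> continuous_intros)
    moreover have "(\<lambda>t. (t, y)) -` epi = - (f -` {a<..})"
      using real by (auto simp: epi_def)
    ultimately show ?thesis by (simp add: closed_def)
  next
    case MInf
    then have "f -` {a<..} = UNIV" using fdiv_generatorD(3)[OF f] by (auto simp: less_le)
    then show ?thesis by simp
  next
    case PInf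
    then have "f -` {a<..} = {}" by auto
    then show ?thesis by simp
  qed
  then show "f -` {a<..} \<inter> space borel \<in> sets borel" by simp
qed

section \<open>The binary f-divergence and g_{f,r}\<close>

lemma persp_pos: "0 < b \<Longrightarrow> persp f b z = ereal b * f (z / b)"
  by (simp add: persp_def)

lemma persp_not_MInfty:
  assumes "fdiv_generator f" and "0 < b"
  shows "persp f b z \<noteq> -\<infinity>"
  using assms fdiv_generatorD(3)[OF assms(1)] by (auto simp: persp_pos ereal_mult_eq_MInfty)

text \<open>D_f(Bernoulli a || Bernoulli b); in this notation g_{f,r}(\<beta>) is the least z \<in> [0, 1] with
  bernoulli_fdiv f z \<beta> \<le> r.\<close>
definition bernoulli_fdiv :: "(real \<Rightarrow> ereal) \<Rightarrow> real \<Rightarrow> real \<Rightarrow> ereal" where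
  "bernoulli_fdiv f a b = persp f b a + persp f (1 - b) (1 - a)"

lemma bernoulli_fdiv_self:
  assumes "fdiv_generator f" and "0 \<le> b" "b \<le> 1"
  shows "bernoulli_fdiv f b b = 0"
  using assms fdiv_generatorD(1)[OF assms(1)] by (auto simp: bernoulli_fdiv_def persp_def)

lemma bernoulli_fdiv_nonneg:
  assumes f: "fdiv_generator f" and b: "0 < b" "b < 1" and a: "0 \<le> a" "a \<le> 1"
  shows "0 \<le> bernoulli_fdiv f a b"
proof (cases "f (a / b) < \<infinity> \<and> f ((1 - a) / (1 - b)) < \<infinity>")
  case True
  then have x: "f (a / b) < \<infinity>" and y: "f ((1 - a) / (1 - b)) < \<infinity>" by auto
  have w: "0 \<le> 1 - b" "1 - b \<le> 1" using b by auto
  have "(1 - (1 - b)) * (a / b) + (1 - b) * ((1 - a) / (1 - b)) = 1"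
    using b by (simp add: field_simps)
  then have "0 \<le> b * real_of_ereal (f (a / b)) + (1 - b) * real_of_ereal (f ((1 - a) / (1 - b)))"
    using fdiv_generator_convex(2)[OF f x y w] fdiv_generatorD(1)[OF f] by simp
  moreover obtain y1 y2 where "f (a / b) = ereal y1" "f ((1 - a) / (1 - b)) = ereal y2"
    using fdiv_generator_finiteE[OF f x] fdiv_generator_finiteE[OF f y] by metis
  ultimately show ?thesis using b by (simp add: bernoulli_fdiv_def persp_pos)
next
  case False
  then have "persp f b a = \<infinity> \<or> persp f (1 - b) (1 - a) = \<infinity>"
    using b by (auto simp: persp_pos)
  then show ?thesis
    using persp_not_MInfty[OF f, of b a] persp_not_MInfty[OF f, of "1 - b" "1 - a"] b
    by (auto simp: bernoulli_fdiv_def)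
qed

text \<open>Moving the reference point b towards a shrinks the perspective by the factor 1 - l,
  because a / c is the convex combination of 1 and a / b with weights l a / c and (1 - l) b / c.\<close>
lemma persp_shrink:
  assumes f: "fdiv_generator f" and a: "0 \<le> a" and b: "0 < b" and l: "0 \<le> l" "l \<le> 1"
    and c: "c = l * a + (1 - l) * b" "0 < c"
  shows "persp f c a \<le> ereal (1 - l) * persp f b a"
proof (cases "f (a / b) < \<infinity>")
  case True
  define t where "t = (1 - l) * b / c"
  have t: "0 \<le> t" "t \<le> 1" using a b l c by (auto simp: t_def field_simps)
  have comb: "(1 - t) * 1 + t * (a / b) = a / c"
    using b c by (simp add: t_def field_simps)
  have f1: "f 1 < \<infinity>" using fdiv_generatorD(1)[OF f] by simp
  note conv = fdiv_generator_convex[OF f f1 True t, unfolded comb]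
  obtain y1 y2 where y1: "f (a / c) = ereal y1" and y2: "f (a / b) = ereal y2"
    using fdiv_generator_finiteE[OF f conv(1)] fdiv_generator_finiteE[OF f True] by metis
  have "y1 \<le> t * y2" using conv(2) fdiv_generatorD(1)[OF f] by (simp add: y1 y2)
  then have "c * y1 \<le> c * (t * y2)" using c by (intro mult_left_mono) auto
  also have "\<dots> = (1 - l) * (b * y2)" using c by (simp add: t_def)
  finally show ?thesis using b c(2) by (simp add: persp_pos y1 y2)
next
  case False
  show ?thesis
  proof (cases "l = 1")
    case True
    then show ?thesis using c fdiv_generatorD(1)[OF f] by (simp add: persp_pos flip: zero_ereal_def)
  next
    case False
    with \<open>\<not> f (a / b) < \<infinity>\<close> show ?thesis using b l by (simp add: persp_pos)
  qed
qed

lemma bernoulli_fdiv_mono: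
  assumes f: "fdiv_generator f" and a: "0 \<le> a" "a < c" and cb: "c \<le> b" and b: "b < 1"
  shows "bernoulli_fdiv f a c \<le> bernoulli_fdiv f a b"
proof -
  define l where "l = (b - c) / (b - a)"
  have l: "0 \<le> l" "l \<le> 1" using a cb by (auto simp: l_def field_simps)
  have "l * (b - a) = b - c" using a cb by (simp add: l_def)
  then have c: "c = l * a + (1 - l) * b" by (simp add: algebra_simps)
  then have c': "1 - c = l * (1 - a) + (1 - l) * (1 - b)" by (simp add: algebra_simps)
  have pos: "0 < b" "0 < c" "0 < 1 - b" "0 < 1 - c" "0 \<le> 1 - a" using a cb b by auto
  have "bernoulli_fdiv f a c \<le> ereal (1 - l) * persp f b a + ereal (1 - l) * persp f (1 - b) (1 - a)"
    unfolding bernoulli_fdiv_def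
    using persp_shrink[OF f a(1) pos(1) l c pos(2)] persp_shrink[OF f pos(5) pos(3) l c' pos(4)]
    by (rule add_mono)
  also have "\<dots> = ereal (1 - l) * bernoulli_fdiv f a b"
    unfolding bernoulli_fdiv_def using persp_not_MInfty[OF f] pos
    by (intro ereal_distrib_left[symmetric]) auto
  also have "\<dots> \<le> bernoulli_fdiv f a b"
  proof -
    have "0 \<le> bernoulli_fdiv f a b" using a cb b by (intro bernoulli_fdiv_nonneg[OF f]) auto
    then show ?thesis using l
      by (cases "bernoulli_fdiv f a b") (simp_all add: mult_left_le_one_le)
  qed
  finally show ?thesis .
qed

lemma g_fun_eq:
  "0 \<le> \<beta> \<Longrightarrow> g_fun f r \<beta> = Inf {z\<in>{0..1}. bernoulli_fdiv f z \<beta> \<le> ereal r}"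
  by (simp add: g_fun_def bernoulli_fdiv_def)

lemma
  assumes f: "fdiv_generator f" and \<beta>: "0 \<le> \<beta>" "\<beta> \<le> 1" and r: "0 \<le> r"
  shows g_fun_le: "g_fun f r \<beta> \<le> \<beta>"
    and g_fun_le_bernoulli:
      "\<And>z. 0 \<le> z \<Longrightarrow> z \<le> 1 \<Longrightarrow> bernoulli_fdiv f z \<beta> \<le> ereal r \<Longrightarrow> g_fun f r \<beta> \<le> z"
proof -
  have bdd: "bdd_below {z\<in>{0..1}. bernoulli_fdiv f z \<beta> \<le> ereal r}" by (auto simp: bdd_below_def)
  show "g_fun f r \<beta> \<le> \<beta>"
    unfolding g_fun_eq[OF \<beta>(1)] using bdd \<beta> r bernoulli_fdiv_self[OF f \<beta>] by (intro cInf_lower) auto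
  fix z assume "0 \<le> z" "z \<le> 1" "bernoulli_fdiv f z \<beta> \<le> ereal r"
  then show "g_fun f r \<beta> \<le> z" unfolding g_fun_eq[OF \<beta>(1)] using bdd by (intro cInf_lower) auto
qed

lemma g_fun_nonneg:
  assumes f: "fdiv_generator f" and r: "0 \<le> r" and \<beta>: "\<beta> \<le> 1"
  shows "0 \<le> g_fun f r \<beta>"
proof (cases "0 \<le> \<beta>")
  case True
  have "\<beta> \<in> {z\<in>{0..1}. bernoulli_fdiv f z \<beta> \<le> ereal r}"
    using True \<beta> r bernoulli_fdiv_self[OF f True \<beta>] by simp
  then show ?thesis unfolding g_fun_eq[OF True] by (intro cInf_greatest) auto
qed (simp add: g_fun_def)

lemma g_fun_nonpos:
  assumes "fdiv_generator f" and "0 \<le> r" and "\<beta> \<le> 0"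
  shows "g_fun f r \<beta> = 0"
proof (cases "\<beta> < 0")
  case False
  then have "\<beta> = 0" using assms(3) by simp
  then show ?thesis
    using g_fun_nonneg[OF assms(1,2), of 0] g_fun_le[OF assms(1), of 0 r] assms(2) by simp
qed (simp add: g_fun_def)

lemma
  assumes f: "fdiv_generator f" and r: "0 \<le> r" and \<tau>: "0 \<le> \<tau>" "\<tau> \<le> 1"
  shows g_inv_ge: "\<tau> \<le> g_inv f r \<tau>"
    and g_inv_le_one: "g_inv f r \<tau> \<le> 1"
proof -
  have \<tau>S: "\<tau> \<in> {\<beta>\<in>{0..1}. g_fun f r \<beta> \<le> \<tau>}" using g_fun_le[OF f \<tau> r] \<tau> by simp
  show "\<tau> \<le> g_inv f r \<tau>" unfolding g_inv_def using \<tau>S by (intro cSup_upper) (auto simp: bdd_above_def)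
  show "g_inv f r \<tau> \<le> 1" unfolding g_inv_def using \<tau>S by (intro cSup_least) auto
qed

section \<open>Data processing for a two-set partition\<close>

lemma integrable_indicator_mult:
  fixes g :: "'a \<Rightarrow> real"
  shows "A \<in> sets Q \<Longrightarrow> integrable Q g \<Longrightarrow> integrable Q (\<lambda>x. indicator A x * g x)"
  using integrable_mult_indicator[of A Q g] by simp

lemma integral_indicator_compl_split:
  fixes g :: "'a \<Rightarrow> real"
  assumes A: "A \<in> sets Q" and g: "integrable Q g"
  shows "(\<integral>x. g x \<partial>Q) = (\<integral>x. indicator A x * g x \<partial>Q) + (\<integral>x. indicator (space Q - A) x * g x \<partial>Q)"
proof -
  have "(\<integral>x. g x \<partial>Q) = (\<integral>x. indicator A x * g x + indicator (space Q - A) x * g x \<partial>Q)"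
    by (intro Bochner_Integration.integral_cong) (auto simp: indicator_def)
  also have "\<dots> = (\<integral>x. indicator A x * g x \<partial>Q) + (\<integral>x. indicator (space Q - A) x * g x \<partial>Q)"
    using A g by (intro Bochner_Integration.integral_add integrable_indicator_mult) auto
  finally show ?thesis .
qed

lemma AE_on_set_eq_of_le_mean:
  fixes r :: "'a \<Rightarrow> real"
  assumes Q: "finite_measure Q" and A: "A \<in> sets Q" and r: "integrable Q r"
    and le: "AE x in Q. x \<in> A \<longrightarrow> r x \<le> c"
    and mean: "(\<integral>x. indicator A x * r x \<partial>Q) = c * measure Q A"
  shows "AE x in Q. x \<in> A \<longrightarrow> r x = c"
proof -
  have iA: "integrable Q (indicator A :: 'a \<Rightarrow> real)"
    using A finite_measure.emeasure_finite[OF Q, of A] by (simp add: top.not_eq_extremum)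
  have int: "integrable Q (\<lambda>x. indicator A x * (c - r x))"
    using A r Q by (intro integrable_indicator_mult) (auto simp: finite_measure.integrable_const)
  have "(\<integral>x. indicator A x * (c - r x) \<partial>Q) = (\<integral>x. c * indicator A x - indicator A x * r x \<partial>Q)"
    by (simp add: algebra_simps)
  also have "\<dots> = 0"
    using iA integrable_indicator_mult[OF A r] A mean by simp
  finally have "AE x in Q. indicator A x * (c - r x) = 0"
    using integral_nonneg_eq_0_iff_AE[OF int] le by (auto elim!: AE_mp simp: indicator_def)
  then show ?thesis by eventually_elim (auto simp: indicator_def)
qed

lemma AE_on_set_eq_of_ge_mean:
  fixes r :: "'a \<Rightarrow> real"
  assumes Q: "finite_measure Q" and A: "A \<in> sets Q" and r: "integrable Q r"
    and ge: "AE x in Q. x \<in> A \<longrightarrow> c \<le> r x"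
    and mean: "(\<integral>x. indicator A x * r x \<partial>Q) = c * measure Q A"
  shows "AE x in Q. x \<in> A \<longrightarrow> r x = c"
proof -
  have "AE x in Q. x \<in> A \<longrightarrow> - r x = - c"
    using Q A r ge mean by (intro AE_on_set_eq_of_le_mean) auto
  then show ?thesis by eventually_elim auto
qed

lemma AE_on_set_eq_mean_if_one_sided:
  fixes r :: "'a \<Rightarrow> real"
  assumes Q: "finite_measure Q" and A: "A \<in> sets Q" and r: "integrable Q r"
    and fin: "AE x in Q. f (r x) < \<infinity>" and mean: "(\<integral>x. indicator A x * r x \<partial>Q) = c * measure Q A"
    and one_sided: "\<not> (\<exists>u v. f u < \<infinity> \<and> f v < \<infinity> \<and> u < c \<and> c < v)"
  shows "AE x in Q. x \<in> A \<longrightarrow> r x = c"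
proof -
  consider "\<forall>v. f v < \<infinity> \<longrightarrow> v \<le> c" | "\<forall>u. f u < \<infinity> \<longrightarrow> c \<le> u"
    using one_sided by (meson not_le)
  then show ?thesis
  proof cases
    case 1
    have "AE x in Q. x \<in> A \<longrightarrow> r x \<le> c" using fin by eventually_elim (use 1 in auto)
    then show ?thesis by (rule AE_on_set_eq_of_le_mean[OF Q A r _ mean])
  next
    case 2
    have "AE x in Q. x \<in> A \<longrightarrow> c \<le> r x" using fin by eventually_elim (use 2 in auto)
    then show ?thesis by (rule AE_on_set_eq_of_ge_mean[OF Q A r _ mean])
  qed
qed

lemma AE_on_set_ex:
  assumes A: "A \<in> sets Q" and pos: "0 < measure Q A" and ae: "AE x in Q. x \<in> A \<longrightarrow> P x"
  obtains x where "x \<in> A" "P x"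
proof (rule ccontr)
  assume "\<not> thesis"
  then have nP: "\<And>x. x \<in> A \<Longrightarrow> \<not> P x" using that by blast
  from ae have "AE x in Q. x \<notin> A" by eventually_elim (use nP in blast)
  then have "A \<in> null_sets Q" using AE_iff_null_sets[OF A] by simp
  then show False using pos by (simp add: measure_def null_setsD1)
qed

text \<open>The effective domain of f may be closed, so the mean c can lie on its boundary, where f need
  not have a subgradient; there r is a.e. equal to c on A instead.\<close>
lemma fdiv_generator_jensen_on_set:
  fixes Q :: "'a measure" and r :: "'a \<Rightarrow> real"
  assumes f: "fdiv_generator f" and Q: "finite_measure Q"
    and r: "integrable Q r" and fin: "AE x in Q. f (r x) < \<infinity>"
    and fr: "integrable Q (\<lambda>x. real_of_ereal (f (r x)))"
    and A: "A \<in> sets Q" and pos: "0 < measure Q A"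
  defines "c \<equiv> (\<integral>x. indicator A x * r x \<partial>Q) / measure Q A"
  shows "f c < \<infinity>"
    and "measure Q A * real_of_ereal (f c) \<le> (\<integral>x. indicator A x * real_of_ereal (f (r x)) \<partial>Q)"
proof -
  define F where "F t = real_of_ereal (f t)" for t
  have mean: "(\<integral>x. indicator A x * r x \<partial>Q) = c * measure Q A"
    using pos by (simp add: c_def)
  have iA: "integrable Q (indicator A :: 'a \<Rightarrow> real)"
    using A finite_measure.emeasure_finite[OF Q, of A] by (simp add: top.not_eq_extremum)
  have ir: "integrable Q (\<lambda>x. indicator A x * r x)" by (rule integrable_indicator_mult[OF A r])
  have iF: "integrable Q (\<lambda>x. indicator A x * F (r x))"
    unfolding F_def by (rule integrable_indicator_mult[OF A fr])
  have "f c < \<infinity> \<and> measure Q A * F c \<le> (\<integral>x. indicator A x * F (r x) \<partial>Q)"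
  proof (cases "\<exists>u v. f u < \<infinity> \<and> f v < \<infinity> \<and> u < c \<and> c < v")
    case True
    then obtain u v where uv: "f u < \<infinity>" "f v < \<infinity>" "u < c" "c < v" by blast
    obtain k where k: "\<And>t. f t < \<infinity> \<Longrightarrow> F c + k * (t - c) \<le> F t"
      using fdiv_generator_subgradient[OF f uv] unfolding F_def by blast
    have "measure Q A * F c = (\<integral>x. (F c - k * c) * indicator A x + k * (indicator A x * r x) \<partial>Q)"
      using iA ir A mean by (simp add: algebra_simps)
    also have "\<dots> \<le> (\<integral>x. indicator A x * F (r x) \<partial>Q)"
    proof (rule integral_mono_AE)
      show "AE x in Q. (F c - k * c) * indicator A x + k * (indicator A x * r x) \<le> indicator A x * F (r x)"
        using fin
      proof eventually_elim
        case (elim x)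
        then show ?case using k[OF elim] by (simp add: indicator_def algebra_simps)
      qed
    qed (use iA ir iF in simp_all)
    finally show ?thesis using fdiv_generator_slope_mono(1)[OF f uv] by simp
  next
    case False
    then have ae: "AE x in Q. x \<in> A \<longrightarrow> r x = c"
      using AE_on_set_eq_mean_if_one_sided[OF Q A r fin mean] by blast
    then have "AE x in Q. x \<in> A \<longrightarrow> r x = c \<and> f (r x) < \<infinity>" using fin by eventually_elim auto
    then obtain x where "r x = c \<and> f (r x) < \<infinity>" by (rule AE_on_set_ex[OF A pos])
    then have fc: "f c < \<infinity>" by (elim conjE) simp
    have "(\<integral>x. indicator A x * F (r x) \<partial>Q) = (\<integral>x. F c * indicator A x \<partial>Q)"
    proof (rule integral_cong_AE)
      show "AE x in Q. indicator A x * F (r x) = F c * indicator A x"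
        using ae by eventually_elim (auto simp: indicator_def)
    qed (use iF iA in \<open>simp_all add: borel_measurable_integrable\<close>)
    also have "\<dots> = F c * measure Q A" using A by simp
    finally show ?thesis using fc by simp
  qed
  then show "f c < \<infinity>" "measure Q A * real_of_ereal (f c) \<le> (\<integral>x. indicator A x * real_of_ereal (f (r x)) \<partial>Q)"
    unfolding F_def by auto
qed

lemma
  fixes P Q :: "'a measure"
  assumes P: "prob_space P" and Q: "prob_space Q"
    and sets: "sets P = sets Q" and ac: "absolutely_continuous Q P"
  defines "r \<equiv> \<lambda>x. enn2real (RN_deriv Q P x)"
  shows integrable_RN_deriv_real: "integrable Q r"
    and integral_indicator_RN_deriv_real: "A \<in> sets Q \<Longrightarrow> (\<integral>x. indicator A x * r x \<partial>Q) = measure P A"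
proof -
  have sfQ: "sigma_finite_measure Q" and sfP: "sigma_finite_measure P"
    using P Q by (auto simp: prob_space_imp_sigma_finite)
  have "AE x in Q. RN_deriv Q P x \<noteq> \<infinity>"
    using sigma_finite_measure.RN_deriv_finite[OF sfQ sfP ac sets] .
  then have RN: "AE x in Q. RN_deriv Q P x = ennreal (r x)"
    by eventually_elim (auto simp: r_def ennreal_enn2real_if)
  have r0: "0 \<le> r x" for x unfolding r_def by simp
  have emP: "emeasure P A = (\<integral>\<^sup>+x. ennreal (indicator A x * r x) \<partial>Q)" if A: "A \<in> sets Q" for A
  proof -
    have "emeasure P A = emeasure (density Q (RN_deriv Q P)) A"
      by (simp add: sigma_finite_measure.density_RN_deriv[OF sfQ ac sets])
    also have "\<dots> = (\<integral>\<^sup>+x. RN_deriv Q P x * indicator A x \<partial>Q)"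
      using A by (simp add: emeasure_density)
    also have "\<dots> = (\<integral>\<^sup>+x. ennreal (indicator A x * r x) \<partial>Q)"
      by (rule nn_integral_cong_AE) (use RN in \<open>eventually_elim, auto simp: indicator_def\<close>)
    finally show ?thesis .
  qed
  have "(\<integral>\<^sup>+x. ennreal (r x) \<partial>Q) = emeasure P (space Q)"
    using emP[of "space Q"] by (simp add: indicator_def cong: nn_integral_cong)
  also have "\<dots> < \<infinity>"
    using prob_space.emeasure_space_1[OF P] sets_eq_imp_space_eq[OF sets] by simp
  finally show ir: "integrable Q r"
    using r0 unfolding r_def by (intro integrableI_nonneg) auto
  assume A: "A \<in> sets Q"
  have "emeasure P A = ennreal (\<integral>x. indicator A x * r x \<partial>Q)"
    unfolding emP[OF A] using integrable_indicator_mult[OF A ir] r0 by (intro nn_integral_eq_integral) auto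
  moreover have "0 \<le> (\<integral>x. indicator A x * r x \<partial>Q)" using r0 by simp
  ultimately show "(\<integral>x. indicator A x * r x \<partial>Q) = measure P A" by (simp add: measure_def)
qed

lemma integrable_of_bounded_below:
  fixes \<phi> g :: "'a \<Rightarrow> real"
  assumes \<phi>: "\<phi> \<in> borel_measurable Q" and pos: "(\<integral>\<^sup>+x. ennreal (\<phi> x) \<partial>Q) < \<infinity>"
    and g: "integrable Q g" and le: "AE x in Q. g x \<le> \<phi> x"
  shows "integrable Q \<phi>"
proof -
  have "(\<integral>\<^sup>+x. ennreal (norm (\<phi> x)) \<partial>Q) \<le> (\<integral>\<^sup>+x. ennreal (\<phi> x) + ennreal (norm (g x)) \<partial>Q)"
    using le
  proof (intro nn_integral_mono_AE, eventually_elim)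
    case (elim x)
    show ?case
    proof (cases "0 \<le> \<phi> x")
      case False
      then have "ennreal (norm (\<phi> x)) \<le> ennreal (norm (g x))" using elim by (intro ennreal_leI) auto
      then show ?thesis by (simp add: add_increasing)
    qed (simp add: add_increasing2)
  qed
  also have "\<dots> = (\<integral>\<^sup>+x. ennreal (\<phi> x) \<partial>Q) + (\<integral>\<^sup>+x. ennreal (norm (g x)) \<partial>Q)"
    using \<phi> g by (intro nn_integral_add) auto
  also have "\<dots> < \<infinity>" using pos g by (simp add: integrable_iff_bounded)
  finally show ?thesis using \<phi> by (simp add: integrable_iff_bounded)
qed

lemma enn2ereal_eq_ereal: "x \<noteq> \<top> \<Longrightarrow> enn2ereal x = ereal (enn2real x)"
  by (metis enn2ereal_ennreal enn2real_nonneg ennreal_enn2real_if)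

text \<open>When finite, the f-divergence is an ordinary Lebesgue integral: the positive part is finite by
  assumption and the negative part is controlled by an affine minorant of f and the
  integrability of the density.\<close>
lemma fdiv_eq_integral:
  fixes P Q :: "'a measure"
  assumes f: "fdiv_generator f" and P: "prob_space P" and Q: "prob_space Q"
    and sets: "sets P = sets Q" and ac: "absolutely_continuous Q P"
    and nf: "fdiv f P Q \<noteq> \<infinity>"
  defines "r \<equiv> \<lambda>x. enn2real (RN_deriv Q P x)"
  shows "AE x in Q. f (r x) < \<infinity>" and "integrable Q (\<lambda>x. real_of_ereal (f (r x)))"
    and "fdiv f P Q = ereal (\<integral>x. real_of_ereal (f (r x)) \<partial>Q)"
proof -
  define \<phi> where "\<phi> x = real_of_ereal (f (r x))" for x
  define G where "G = (\<integral>\<^sup>+ x. e2ennreal (f (r x)) \<partial>Q)"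
  define H where "H = (\<integral>\<^sup>+ x. e2ennreal (- f (r x)) \<partial>Q)"
  have fd: "fdiv f P Q = enn2ereal G - enn2ereal H"
    using ac sets unfolding fdiv_def G_def H_def r_def Let_def by simp
  have ir: "integrable Q r" unfolding r_def by (rule integrable_RN_deriv_real[OF P Q sets ac])
  have [measurable]: "f \<in> borel_measurable borel" by (rule borel_measurable_fdiv_generator[OF f])
  have rm[measurable]: "r \<in> borel_measurable Q" unfolding r_def by measurable
  have G_fin: "G \<noteq> \<top>" using nf fd by auto
  have "AE x in Q. e2ennreal (f (r x)) \<noteq> \<infinity>"
    using nn_integral_PInf_AE[of _ Q] G_fin unfolding G_def by simp
  then show fin: "AE x in Q. f (r x) < \<infinity>"
    by eventually_elim (auto simp: less_top[symmetric])
  have f\<phi>: "AE x in Q. f (r x) = ereal (\<phi> x)"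
    using fin by eventually_elim (simp add: \<phi>_def ereal_real_of_ereal_fdiv_generator[OF f])
  have G: "G = (\<integral>\<^sup>+ x. ennreal (\<phi> x) \<partial>Q)" and H: "H = (\<integral>\<^sup>+ x. ennreal (- \<phi> x) \<partial>Q)"
    unfolding G_def H_def
    by (rule nn_integral_cong_AE, use f\<phi> in \<open>eventually_elim, auto simp: e2ennreal_ereal\<close>)+
  obtain c0 k0 where ck: "\<And>t. f t < \<infinity> \<Longrightarrow> c0 + k0 * t \<le> real_of_ereal (f t)"
    using fdiv_generator_affine_minorant[OF f] by blast
  have i\<phi>: "integrable Q \<phi>"
  proof (rule integrable_of_bounded_below)
    show "(\<integral>\<^sup>+ x. ennreal (\<phi> x) \<partial>Q) < \<infinity>" using G_fin G by (simp add: less_top)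
    show "integrable Q (\<lambda>x. c0 + k0 * r x)"
      using ir Q by (simp add: finite_measure.integrable_const prob_space_def)
    show "AE x in Q. c0 + k0 * r x \<le> \<phi> x"
      using fin by eventually_elim (simp add: \<phi>_def ck)
  qed (unfold \<phi>_def, measurable)
  then show "integrable Q (\<lambda>x. real_of_ereal (f (r x)))" unfolding \<phi>_def .
  have H_fin: "H \<noteq> \<top>"
  proof -
    have "H \<le> (\<integral>\<^sup>+ x. ennreal (norm (\<phi> x)) \<partial>Q)" unfolding H
      by (intro nn_integral_mono) (auto intro: ennreal_leI)
    also have "\<dots> < \<infinity>" using i\<phi> by (simp add: integrable_iff_bounded)
    finally show ?thesis by simp
  qed
  have "(\<integral>x. \<phi> x \<partial>Q) = enn2real G - enn2real H"
    unfolding G H by (rule real_lebesgue_integral_def[OF i\<phi>])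
  then show "fdiv f P Q = ereal (\<integral>x. real_of_ereal (f (r x)) \<partial>Q)"
    unfolding fd enn2ereal_eq_ereal[OF G_fin] enn2ereal_eq_ereal[OF H_fin] by (simp add: \<phi>_def)
qed

lemma fdiv_nonneg:
  fixes P Q :: "'a measure"
  assumes f: "fdiv_generator f" and P: "prob_space P" and Q: "prob_space Q"
    and sets: "sets P = sets Q"
  shows "0 \<le> fdiv f P Q"
proof (cases "absolutely_continuous Q P \<and> fdiv f P Q \<noteq> \<infinity>")
  case True
  then have ac: "absolutely_continuous Q P" and nf: "fdiv f P Q \<noteq> \<infinity>" by auto
  define r where "r x = enn2real (RN_deriv Q P x)" for x
  note R = fdiv_eq_integral[OF f P Q sets ac nf, folded r_def]
  have Q1: "measure Q (space Q) = 1" using Q by (simp add: prob_space.prob_space)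
  have "measure P (space Q) = 1"
    using prob_space.prob_space[OF P] sets_eq_imp_space_eq[OF sets] by simp
  then have mean: "(\<integral>x. indicator (space Q) x * r x \<partial>Q) / measure Q (space Q) = 1"
    using integral_indicator_RN_deriv_real[OF P Q sets ac, folded r_def, of "space Q"] Q1 by simp
  have "0 \<le> (\<integral>x. indicator (space Q) x * real_of_ereal (f (r x)) \<partial>Q)"
    using fdiv_generator_jensen_on_set(2)[OF f _ integrable_RN_deriv_real[OF P Q sets ac, folded r_def]
        R(1,2) sets.top, unfolded mean] Q Q1 fdiv_generatorD(1)[OF f]
    by (simp add: prob_space_def)
  also have "\<dots> = (\<integral>x. real_of_ereal (f (r x)) \<partial>Q)"
    by (intro Bochner_Integration.integral_cong) auto
  finally show ?thesis using R(3) by simp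
qed (use sets in \<open>auto simp: fdiv_def\<close>)

text \<open>Jensen's inequality applied separately on A and on its complement.\<close>
lemma bernoulli_fdiv_le_fdiv:
  fixes P Q :: "'a measure"
  assumes f: "fdiv_generator f" and P: "prob_space P" and Q: "prob_space Q"
    and sets: "sets P = sets Q" and A: "A \<in> sets Q"
    and b: "0 < measure Q A" "measure Q A < 1"
  shows "bernoulli_fdiv f (measure P A) (measure Q A) \<le> fdiv f P Q"
proof (cases "absolutely_continuous Q P \<and> fdiv f P Q \<noteq> \<infinity>")
  case True
  then have ac: "absolutely_continuous Q P" and nf: "fdiv f P Q \<noteq> \<infinity>" by auto
  define r where "r x = enn2real (RN_deriv Q P x)" for x
  define \<phi> where "\<phi> x = real_of_ereal (f (r x))" for x
  note R = fdiv_eq_integral[OF f P Q sets ac nf, folded r_def]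
  note ir = integrable_RN_deriv_real[OF P Q sets ac, folded r_def]
  note intP = integral_indicator_RN_deriv_real[OF P Q sets ac, folded r_def]
  have fmQ: "finite_measure Q" using Q by (simp add: prob_space_def)
  have A': "space Q - A \<in> sets Q" using A by auto
  have QA': "measure Q (space Q - A) = 1 - measure Q A"
    using prob_space.prob_compl[OF Q A] .
  have PA': "measure P (space Q - A) = 1 - measure P A"
    using prob_space.prob_compl[OF P, of A] A sets sets_eq_imp_space_eq[OF sets] by simp
  note J1 = fdiv_generator_jensen_on_set[OF f fmQ ir R(1,2) A b(1), folded \<phi>_def, unfolded intP[OF A]]
  have b': "0 < measure Q (space Q - A)" using QA' b by simp
  note J2 = fdiv_generator_jensen_on_set[OF f fmQ ir R(1,2) A' b', folded \<phi>_def, unfolded intP[OF A'] QA' PA']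
  have i\<phi>: "integrable Q \<phi>" using R(2) unfolding \<phi>_def .
  note split = integral_indicator_compl_split[OF A i\<phi>]
  let ?a = "measure P A" and ?b = "measure Q A"
  obtain y1 where y1: "f (?a / ?b) = ereal y1" using fdiv_generator_finiteE[OF f J1(1)] .
  obtain y2 where y2: "f ((1 - ?a) / (1 - ?b)) = ereal y2" using fdiv_generator_finiteE[OF f J2(1)] .
  have "bernoulli_fdiv f ?a ?b = ereal (?b * y1 + (1 - ?b) * y2)"
    using b by (simp add: bernoulli_fdiv_def persp_pos y1 y2)
  also have "\<dots> \<le> ereal (\<integral>x. \<phi> x \<partial>Q)" using J1(2) J2(2) b split by (simp add: y1 y2)
  also have "\<dots> = fdiv f P Q" using R(3) by (simp add: \<phi>_def)
  finally show ?thesis .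
qed (use sets in \<open>auto simp: fdiv_def\<close>)

lemma bernoulli_fdiv_le_fdiv_of_less:
  fixes P Q :: "'a measure"
  assumes f: "fdiv_generator f" and P: "prob_space P" and Q: "prob_space Q"
    and sets: "sets P = sets Q" and A: "A \<in> sets Q"
    and \<beta>: "measure P A < \<beta>" "\<beta> \<le> measure Q A"
  shows "bernoulli_fdiv f (measure P A) \<beta> \<le> fdiv f P Q"
proof (cases "absolutely_continuous Q P \<and> fdiv f P Q \<noteq> \<infinity>")
  case True
  have "measure Q A < 1"
  proof (rule ccontr)
    assume "\<not> measure Q A < 1"
    then have "measure Q (space Q - A) = 0"
      using prob_space.prob_compl[OF Q A] prob_space.prob_le_1[OF Q, of A] by simp
    then have "emeasure Q (space Q - A) = 0"
      using Q by (simp add: prob_space_def finite_measure.emeasure_eq_measure)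
    then have "space Q - A \<in> null_sets Q" using A by blast
    then have "space Q - A \<in> null_sets P" using True unfolding absolutely_continuous_def by blast
    from null_setsD1[OF this] have "measure P (space Q - A) = 0" by (simp add: measure_def)
    then have "measure P A = 1"
      using prob_space.prob_compl[OF P, of A] A sets sets_eq_imp_space_eq[OF sets] by simp
    then show False using \<beta> prob_space.prob_le_1[OF Q, of A] by simp
  qed
  then have "bernoulli_fdiv f (measure P A) \<beta> \<le> bernoulli_fdiv f (measure P A) (measure Q A)"
    using \<beta> by (intro bernoulli_fdiv_mono[OF f]) auto
  also have "\<dots> \<le> fdiv f P Q"
  proof (rule bernoulli_fdiv_le_fdiv[OF f P Q sets A _ \<open>measure Q A < 1\<close>])
    show "0 < measure Q A" using \<beta> measure_nonneg[of P A] by linarith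
  qed
  finally show ?thesis .
qed (use sets in \<open>auto simp: fdiv_def\<close>)

section \<open>Mixtures of the source distributions\<close>

lemma sets_mixture [measurable_cong]: "sets (mixture d lam Ms) = sets borel"
  unfolding mixture_def using sets.sets_measure_of_eq[of borel] by simp

lemma emeasure_mixture:
  assumes Ms: "\<And>i. i < d \<Longrightarrow> sets (Ms i) = sets borel" and A: "A \<in> sets borel"
  shows "emeasure (mixture d lam Ms) A = (\<Sum>i<d. ennreal (lam i) * emeasure (Ms i) A)"
proof -
  define \<mu> where "\<mu> A = (\<Sum>i<d. ennreal (lam i) * emeasure (Ms i) A)" for A
  have "countably_additive (sets borel) \<mu>"
  proof (rule countably_additiveI)
    fix A :: "nat \<Rightarrow> real set"
    assume A: "range A \<subseteq> sets borel" "disjoint_family A" "\<Union> (range A) \<in> sets borel"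
    have "(\<Sum>n. \<mu> (A n)) = (\<Sum>i<d. \<Sum>n. ennreal (lam i) * emeasure (Ms i) (A n))"
      unfolding \<mu>_def by (rule suminf_sum) simp
    also have "\<dots> = \<mu> (\<Union> (range A))"
      unfolding \<mu>_def using A Ms by (intro sum.cong refl) (simp add: ennreal_suminf_cmult suminf_emeasure)
    finally show "(\<Sum>n. \<mu> (A n)) = \<mu> (\<Union> (range A))" .
  qed
  moreover have "positive (sets borel) \<mu>" by (simp add: positive_def \<mu>_def)
  moreover have "sigma_algebra UNIV (sets borel)" using sets.sigma_algebra_axioms[of borel] by simp
  moreover have "mixture d lam Ms = measure_of UNIV (sets borel) \<mu>"
    unfolding mixture_def \<mu>_def ..
  ultimately have "emeasure (mixture d lam Ms) A = \<mu> A"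
    using emeasure_measure_of_sigma A by metis
  then show ?thesis by (simp add: \<mu>_def)
qed

lemma measure_mixture:
  assumes Ms: "\<And>i. i < d \<Longrightarrow> real_distribution (Ms i)" and lam: "\<And>i. i < d \<Longrightarrow> 0 \<le> lam i"
    and A: "A \<in> sets borel"
  shows "measure (mixture d lam Ms) A = (\<Sum>i<d. lam i * measure (Ms i) A)"
proof -
  have "emeasure (mixture d lam Ms) A = (\<Sum>i<d. ennreal (lam i * measure (Ms i) A))"
    using Ms lam
    by (subst emeasure_mixture[OF real_distribution.events_eq_borel[OF Ms] A]) (auto intro!: sum.cong simp: real_distribution_def
        prob_space_def finite_measure.emeasure_eq_measure ennreal_mult)
  also have "\<dots> = ennreal (\<Sum>i<d. lam i * measure (Ms i) A)"
    using lam by (intro sum_ennreal) auto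
  moreover have "0 \<le> (\<Sum>i<d. lam i * measure (Ms i) A)" using lam by (intro sum_nonneg) auto
  ultimately show ?thesis by (simp add: measure_def)
qed

lemma real_distribution_mixture:
  assumes Ms: "\<And>i. i < d \<Longrightarrow> real_distribution (Ms i)" and lam: "\<And>i. i < d \<Longrightarrow> 0 \<le> lam i"
    and sum1: "(\<Sum>i<d. lam i) = 1"
  shows "real_distribution (mixture d lam Ms)"
proof -
  have sp: "space (mixture d lam Ms) = UNIV"
    using sets_eq_imp_space_eq[OF sets_mixture] by simp
  have one: "emeasure (Ms i) UNIV = 1" if "i < d" for i
  proof -
    interpret real_distribution "Ms i" using Ms[OF that] .
    show ?thesis using emeasure_space_1 by simp
  qed
  have "emeasure (mixture d lam Ms) UNIV = (\<Sum>i<d. ennreal (lam i))"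
    by (subst emeasure_mixture[OF real_distribution.events_eq_borel[OF Ms]]) (auto simp: one)
  also have "\<dots> = 1" using lam sum1 by (subst sum_ennreal) auto
  finally show ?thesis
    by (auto simp: real_distribution_def real_distribution_axioms_def prob_space_def
        prob_space_axioms_def sp sets_mixture intro!: finite_measureI)
qed

lemma convex_hull_measE:
  assumes "Q \<in> convex_hull_meas d Ms"
  obtains lam where "\<And>i. i < d \<Longrightarrow> 0 \<le> lam i" "(\<Sum>i<d. lam i) = 1" "Q = mixture d lam Ms"
  using assms unfolding convex_hull_meas_def by auto

lemma real_distribution_convex_hull_meas:
  assumes "\<And>i. i < d \<Longrightarrow> real_distribution (Ms i)" and "Q \<in> convex_hull_meas d Ms"
  shows "real_distribution Q"
  using assms(2)
proof (rule convex_hull_measE)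
  fix lam assume lam: "\<And>i. i < d \<Longrightarrow> 0 \<le> lam i" "(\<Sum>i<d. lam i) = 1" and "Q = mixture d lam Ms"
  then show ?thesis using real_distribution_mixture[OF assms(1) lam] by simp
qed

lemma INF_fdiv_convex_hull_meas_nonneg:
  assumes f: "fdiv_generator f" and P: "real_distribution P"
    and Ms: "\<And>i. i < d \<Longrightarrow> real_distribution (Ms i)"
  shows "0 \<le> (INF Q\<in>convex_hull_meas d Ms. fdiv f P Q)"
proof (rule INF_greatest)
  fix Q assume "Q \<in> convex_hull_meas d Ms"
  with Ms have "real_distribution Q" by (rule real_distribution_convex_hull_meas)
  then show "0 \<le> fdiv f P Q"
    using P by (intro fdiv_nonneg[OF f]) (auto simp: real_distribution_def real_distribution_axioms_def)
qed

lemma measure_convex_hull_meas_ge: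
  assumes Ms: "\<And>i. i < d \<Longrightarrow> real_distribution (Ms i)" and Q: "Q \<in> convex_hull_meas d Ms"
    and A: "A \<in> sets borel" and ge: "\<And>i. i < d \<Longrightarrow> \<beta> \<le> measure (Ms i) A"
  shows "\<beta> \<le> measure Q A"
  using Q
proof (rule convex_hull_measE)
  fix lam assume lam: "\<And>i. i < d \<Longrightarrow> 0 \<le> lam i" "(\<Sum>i<d. lam i) = 1" and Q: "Q = mixture d lam Ms"
  have "\<beta> = (\<Sum>i<d. lam i * \<beta>)" using lam(2) by (simp add: sum_distrib_right[symmetric])
  also have "\<dots> \<le> (\<Sum>i<d. lam i * measure (Ms i) A)"
    using lam(1) ge by (intro sum_mono mult_left_mono) auto
  also have "\<dots> = measure Q A" unfolding Q by (rule measure_mixture[OF Ms lam(1) A, symmetric])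
  finally show ?thesis .
qed

text \<open>The population version of the coverage bound: if every source puts mass at least \<beta> on A,
  then so does every mixture, and a divergence budget of \<rho>* caps how far below \<beta> the
  mass of A under P can fall.\<close>
lemma g_fun_INF_fdiv_le_measure:
  assumes f: "fdiv_generator f" and P: "real_distribution P"
    and Ms: "\<And>i. i < d \<Longrightarrow> real_distribution (Ms i)"
    and fin: "(INF Q\<in>convex_hull_meas d Ms. fdiv f P Q) \<noteq> \<infinity>"
    and \<beta>: "0 \<le> \<beta>" "\<beta> \<le> 1" and A: "A \<in> sets borel"
    and ge: "\<And>i. i < d \<Longrightarrow> \<beta> \<le> measure (Ms i) A"
  shows "g_fun f (real_of_ereal (INF Q\<in>convex_hull_meas d Ms. fdiv f P Q)) \<beta> \<le> measure P A"
proof -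
  define R where "R = (INF Q\<in>convex_hull_meas d Ms. fdiv f P Q)"
  have "0 \<le> R" unfolding R_def by (rule INF_fdiv_convex_hull_meas_nonneg[OF f P Ms])
  then have r0: "0 \<le> real_of_ereal R" and R: "ereal (real_of_ereal R) = R"
    using fin unfolding R_def[symmetric] by (cases R; simp)+
  interpret P: real_distribution P by (rule P)
  define a where "a = measure P A"
  have a: "0 \<le> a" "a \<le> 1" unfolding a_def by auto
  show ?thesis
  proof (cases "\<beta> \<le> a")
    case True
    then show ?thesis using g_fun_le[OF f \<beta> r0] unfolding R_def a_def by simp
  next
    case False
    have "bernoulli_fdiv f a \<beta> \<le> R"
      unfolding R_def
    proof (rule INF_greatest)
      fix Q assume Q: "Q \<in> convex_hull_meas d Ms"
      with Ms interpret Q: real_distribution Q by (rule real_distribution_convex_hull_meas)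
      have "\<beta> \<le> measure Q A" by (rule measure_convex_hull_meas_ge[OF Ms Q A ge])
      with False A show "bernoulli_fdiv f a \<beta> \<le> fdiv f P Q" unfolding a_def
        by (intro bernoulli_fdiv_le_fdiv_of_less[OF f P.prob_space_axioms Q.prob_space_axioms]) auto
    qed
    then have "g_fun f (real_of_ereal R) \<beta> \<le> a"
      using a R by (intro g_fun_le_bernoulli[OF f \<beta> r0]) auto
    then show ?thesis unfolding R_def a_def .
  qed
qed

section \<open>Quantiles\<close>

lemma (in real_distribution) cdf_crossing:
  assumes \<beta>: "0 < \<beta>" "\<beta> < 1"
  obtains c where "\<beta> \<le> measure M {..c}" "measure M {..<c} \<le> \<beta>"
proof -
  define A where "A = {q. \<beta> \<le> cdf M q}"
  have "eventually (\<lambda>q. \<beta> < cdf M q) at_top"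
    using cdf_lim_at_top_prob \<beta> by (intro order_tendstoD) auto
  then obtain q1 where "\<beta> < cdf M q1" by (auto simp: eventually_at_top_linorder)
  then have A_ne: "A \<noteq> {}" unfolding A_def by (auto intro: less_imp_le)
  have "eventually (\<lambda>q. cdf M q < \<beta>) at_bot"
    using cdf_lim_at_bot \<beta> by (intro order_tendstoD) auto
  then obtain q0 where q0: "\<And>q. q \<le> q0 \<Longrightarrow> cdf M q < \<beta>" by (auto simp: eventually_at_bot_linorder)
  have "q0 \<le> q" if "q \<in> A" for q
    using that q0[of q] unfolding A_def by (cases "q \<le> q0") auto
  then have bdd: "bdd_below A" unfolding bdd_below_def by blast
  define c where "c = Inf A"
  have right: "\<beta> \<le> cdf M y" if y: "c < y" for y
  proof -
    obtain q where "q \<in> A" "q < y" using cInf_lessD[OF A_ne, of y] y unfolding c_def by blast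
    then show ?thesis unfolding A_def using cdf_nondecreasing[of q y] by auto
  qed
  have left: "cdf M y \<le> \<beta>" if y: "y < c" for y
  proof (rule ccontr)
    assume "\<not> cdf M y \<le> \<beta>"
    then have "y \<in> A" unfolding A_def by simp
    then have "c \<le> y" unfolding c_def using bdd by (rule cInf_lower)
    with y show False by simp
  qed
  have lim_right: "(cdf M \<longlongrightarrow> cdf M c) (at_right c)"
    using cdf_is_right_cont[of c] by (simp add: continuous_within)
  have "eventually (\<lambda>y. \<beta> \<le> cdf M y) (at_right c)"
    by (rule eventually_at_rightI[of c "c + 1"]) (auto intro: right)
  with lim_right have "\<beta> \<le> cdf M c" by (rule tendsto_lowerbound) simp
  moreover have "eventually (\<lambda>y. cdf M y \<le> \<beta>) (at_left c)"
    by (rule eventually_at_leftI[of "c - 1" c]) (auto intro: left)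
  with cdf_at_left have "measure M {..<c} \<le> \<beta>" by (rule tendsto_upperbound) simp
  ultimately show ?thesis using that by (simp add: cdf_def2)
qed

lemma quantile_ge_iff:
  assumes "{q. \<beta> \<le> F q} \<noteq> {}" and "bdd_below {q. \<beta> \<le> F q}"
  shows "t \<le> quantile \<beta> F \<longleftrightarrow> (\<forall>q. \<beta> \<le> F q \<longrightarrow> t \<le> q)"
  using assms unfolding quantile_def by (auto intro: cInf_greatest order_trans[OF _ cInf_lower])

lemma quantile_less_imp:
  assumes "{q. \<beta> \<le> F q} \<noteq> {}" and "quantile \<beta> F < c"
  obtains q where "q < c" "\<beta> \<le> F q"
  using cInf_lessD[OF assms(1)] assms(2) unfolding quantile_def by blast

definition ecdf :: "nat \<Rightarrow> (nat \<Rightarrow> real) \<Rightarrow> real \<Rightarrow> real" where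
  "ecdf n v q = (1 / real n) * (\<Sum>j<n. indicator {..q} (v j))"

definition min_ecdf :: "nat \<Rightarrow> (nat \<Rightarrow> nat) \<Rightarrow> (nat \<Rightarrow> nat \<Rightarrow> real) \<Rightarrow> real \<Rightarrow> real" where
  "min_ecdf d m v q = Min ((\<lambda>i. ecdf (m i) (v i) q) ` {..<d})"

lemma ecdf_eq_one: "0 < n \<Longrightarrow> (\<And>j. j < n \<Longrightarrow> v j \<le> q) \<Longrightarrow> ecdf n v q = 1"
  by (simp add: ecdf_def)

lemma ecdf_eq_zero: "(\<And>j. j < n \<Longrightarrow> q < v j) \<Longrightarrow> ecdf n v q = 0"
  by (simp add: ecdf_def indicator_def not_le[symmetric])

lemma ecdf_le_count_less:
  assumes "q < c" shows "ecdf n v q \<le> (1 / real n) * (\<Sum>j<n. indicator {..<c} (v j))"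
  unfolding ecdf_def using assms by (intro mult_left_mono sum_mono) (auto simp: indicator_def)

lemma ecdf_eq_of_no_sample_between:
  assumes "\<And>j. j < n \<Longrightarrow> v j \<le> q \<longleftrightarrow> v j \<le> q'"
  shows "ecdf n v q = ecdf n v q'"
  unfolding ecdf_def using assms by (intro arg_cong2[where f = "(*)"] sum.cong) (auto simp: indicator_def)

lemma min_ecdf_ge_iff: "0 < d \<Longrightarrow> \<beta> \<le> min_ecdf d m v q \<longleftrightarrow> (\<forall>i<d. \<beta> \<le> ecdf (m i) (v i) q)"
  unfolding min_ecdf_def by (subst Min_ge_iff) auto

lemma min_ecdf_cong:
  "(\<And>i j. i < d \<Longrightarrow> j < m i \<Longrightarrow> v i j = v' i j) \<Longrightarrow> min_ecdf d m v = min_ecdf d m v'"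
  unfolding min_ecdf_def ecdf_def by (auto intro!: ext arg_cong[where f = Min] image_cong sum.cong)

context
  fixes d :: nat and m :: "nat \<Rightarrow> nat" and v :: "nat \<Rightarrow> nat \<Rightarrow> real" and \<beta> :: real
  assumes d: "0 < d" and m: "\<And>i. i < d \<Longrightarrow> 0 < m i" and \<beta>: "0 < \<beta>" "\<beta> \<le> 1"
begin

definition samples :: "real set" where
  "samples = (\<lambda>(i, j). v i j) ` (SIGMA i:{..<d}. {..<m i})"

lemma finite_samples: "finite samples"
  unfolding samples_def by (auto intro: finite_SigmaI)

lemma sample_in_samples: "i < d \<Longrightarrow> j < m i \<Longrightarrow> v i j \<in> samples"
  unfolding samples_def by force

lemma min_ecdf_level_set_ne: "{q. \<beta> \<le> min_ecdf d m v q} \<noteq> {}"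
proof -
  have "ecdf (m i) (v i) (Max samples) = 1" if "i < d" for i
    using that m finite_samples sample_in_samples by (intro ecdf_eq_one) auto
  then have "\<beta> \<le> min_ecdf d m v (Max samples)"
    using \<beta> unfolding min_ecdf_ge_iff[OF d] by simp
  then show ?thesis by blast
qed

lemma min_ecdf_level_set_bdd: "bdd_below {q. \<beta> \<le> min_ecdf d m v q}"
proof -
  have "Min samples \<le> q" if "\<beta> \<le> min_ecdf d m v q" for q
  proof (rule ccontr)
    assume q: "\<not> Min samples \<le> q"
    have "q < v 0 j" if "j < m 0" for j
      using Min_le[OF finite_samples sample_in_samples[OF d that]] q by simp
    then have "ecdf (m 0) (v 0) q = 0" by (rule ecdf_eq_zero)
    moreover have "\<beta> \<le> ecdf (m 0) (v 0) q" using that d unfolding min_ecdf_ge_iff[OF d] by blast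
    ultimately show False using \<beta> by simp
  qed
  then show ?thesis by (intro bdd_belowI[of _ "Min samples"]) simp
qed

lemma ecdf_level_set_sample_below:
  assumes q: "\<forall>i<d. \<beta> \<le> ecdf (m i) (v i) q"
  obtains i j where "i < d" "j < m i" "v i j \<le> q" "\<forall>i'<d. \<beta> \<le> ecdf (m i') (v i') (v i j)"
proof -
  define K where "K = {x \<in> samples. x \<le> q}"
  have "K \<noteq> {}"
  proof
    assume "K = {}"
    then have "q < v 0 j" if "j < m 0" for j
      using sample_in_samples[OF d that] unfolding K_def by (auto simp: not_le)
    then have "ecdf (m 0) (v 0) q = 0" by (rule ecdf_eq_zero)
    moreover have "\<beta> \<le> ecdf (m 0) (v 0) q" using q d by blast
    ultimately show False using \<beta> by simp
  qed
  moreover have "finite K" using finite_samples by (simp add: K_def)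
  ultimately have K: "Max K \<in> K" "\<And>x. x \<in> K \<Longrightarrow> x \<le> Max K" by auto
  then obtain i j where ij: "i < d" "j < m i" "v i j = Max K"
    unfolding K_def samples_def by auto
  have le: "v i j \<le> q" using K(1) ij(3) by (simp add: K_def)
  have "ecdf (m i') (v i') (v i j) = ecdf (m i') (v i') q" if i': "i' < d" for i'
  proof (rule ecdf_eq_of_no_sample_between)
    fix j' assume "j' < m i'"
    then have "v i' j' \<in> samples" by (rule sample_in_samples[OF i'])
    then show "v i' j' \<le> v i j \<longleftrightarrow> v i' j' \<le> q"
      using K(2) le unfolding ij(3) K_def by auto
  qed
  with q have "\<forall>i'<d. \<beta> \<le> ecdf (m i') (v i') (v i j)" by simp
  with ij(1,2) le show ?thesis by (rule that)
qed

text \<open>The minimal empirical cdf is a step function jumping only at sample points, so its level set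
  is determined by the samples it contains; this makes the empirical quantile a measurable function
  of the samples.\<close>
lemma le_quantile_min_ecdf_iff:
  "t \<le> quantile \<beta> (min_ecdf d m v) \<longleftrightarrow>
    (\<forall>i<d. \<forall>j<m i. (\<forall>i'<d. \<beta> \<le> ecdf (m i') (v i') (v i j)) \<longrightarrow> t \<le> v i j)"
  unfolding quantile_ge_iff[OF min_ecdf_level_set_ne min_ecdf_level_set_bdd] min_ecdf_ge_iff[OF d]
proof (intro iffI allI impI)
  fix q assume t: "\<forall>i<d. \<forall>j<m i. (\<forall>i'<d. \<beta> \<le> ecdf (m i') (v i') (v i j)) \<longrightarrow> t \<le> v i j"
    and q: "\<forall>i<d. \<beta> \<le> ecdf (m i) (v i) q"
  obtain i j where "i < d" "j < m i" "v i j \<le> q" "\<forall>i'<d. \<beta> \<le> ecdf (m i') (v i') (v i j)"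
    using ecdf_level_set_sample_below[OF q] .
  with t show "t \<le> q" by (blast intro: order_trans)
next
  fix i j assume "\<forall>q. (\<forall>i<d. \<beta> \<le> ecdf (m i) (v i) q) \<longrightarrow> t \<le> q"
    and "\<forall>i'<d. \<beta> \<le> ecdf (m i') (v i') (v i j)"
  then show "t \<le> v i j" by blast
qed

lemma quantile_min_ecdf_less_imp:
  assumes "quantile \<beta> (min_ecdf d m v) < c"
  obtains q where "q < c" "\<And>i. i < d \<Longrightarrow> \<beta> \<le> ecdf (m i) (v i) q"
proof -
  obtain q where "q < c" "\<beta> \<le> min_ecdf d m v q"
    using quantile_less_imp[OF min_ecdf_level_set_ne assms] .
  with that show ?thesis unfolding min_ecdf_ge_iff[OF d] by blast
qed

end

section \<open>Concentration and independence\<close>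

lemma ecdf_eq_sum_if: "ecdf n v q = (1 / real n) * (\<Sum>j<n. if v j \<le> q then 1 else 0)"
  unfolding ecdf_def by (simp add: indicator_def of_bool_def)

lemma borel_measurable_quantile_min_ecdf:
  assumes d: "0 < d" and m: "\<And>i. i < d \<Longrightarrow> 0 < m i" and \<beta>: "0 < \<beta>" "\<beta> \<le> 1"
    and U: "\<And>i j. i < d \<Longrightarrow> j < m i \<Longrightarrow> U i j \<in> borel_measurable N"
  shows "(\<lambda>x. quantile \<beta> (min_ecdf d m (\<lambda>i j. U i j x))) \<in> borel_measurable N"
proof (subst borel_measurable_iff_ge, intro allI)
  fix t
  have "{x \<in> space N. t \<le> quantile \<beta> (min_ecdf d m (\<lambda>i j. U i j x))} =
      {x \<in> space N. \<forall>i<d. \<forall>j<m i. (\<forall>i'<d. \<beta> \<le> (1 / real (m i')) *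
          (\<Sum>j'<m i'. if U i' j' x \<le> U i j x then 1 else 0)) \<longrightarrow> t \<le> U i j x}"
    by (simp add: le_quantile_min_ecdf_iff[OF d m \<beta>] ecdf_eq_sum_if)
  also have "\<dots> \<in> sets N" using U by measurable
  finally show "{x \<in> space N. t \<le> quantile \<beta> (min_ecdf d m (\<lambda>i j. U i j x))} \<in> sets N" .
qed

lemma (in prob_space) prob_empirical_frequency_ge:
  fixes U :: "nat \<Rightarrow> 'a \<Rightarrow> real" and D :: "real measure"
  assumes n: "0 < n" and ind: "indep_vars (\<lambda>_. borel) U {..<n}"
    and dist: "\<And>j. j < n \<Longrightarrow> distr M borel (U j) = D"
    and le: "measure D A \<le> \<beta> - \<epsilon>" and A: "A \<in> sets borel" and \<epsilon>: "0 \<le> \<epsilon>"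
  shows "prob {w\<in>space M. real n * \<beta> \<le> (\<Sum>j<n. indicator A (U j w))} \<le> exp (- 2 * real n * \<epsilon>\<^sup>2)"
proof -
  define X where "X j w = (indicator A (U j w) :: real)" for j w
  have U: "random_variable borel (U j)" if "j < n" for j
    using ind that unfolding indep_vars_def by auto
  have EX: "expectation (X j) = measure D A" if j: "j < n" for j
    using U[OF j] A unfolding X_def dist[OF j, symmetric]
    by (subst integral_distr[symmetric]) auto
  interpret Hoeffding_ineq M "{..<n}" X "\<lambda>_. 0" "\<lambda>_. 1" "\<Sum>j<n. expectation (X j)"
  proof unfold_locales
    show "indep_vars (\<lambda>_. borel) X {..<n}"
      unfolding X_def using A by (intro indep_vars_compose2[OF ind]) simp
  qed (auto simp: X_def)
  have "prob {w\<in>space M. real n * \<beta> \<le> (\<Sum>j<n. indicator A (U j w))}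
      \<le> prob {w\<in>space M. (\<Sum>j<n. expectation (X j)) + real n * \<epsilon> \<le> (\<Sum>j<n. X j w)}"
  proof (rule finite_measure_mono)
    have "real n * measure D A + real n * \<epsilon> \<le> real n * \<beta>"
      using le by (simp add: distrib_left[symmetric] mult_left_mono)
    then show "{w\<in>space M. real n * \<beta> \<le> (\<Sum>j<n. indicator A (U j w))}
        \<subseteq> {w\<in>space M. (\<Sum>j<n. expectation (X j)) + real n * \<epsilon> \<le> (\<Sum>j<n. X j w)}"
      using EX by (auto simp: X_def)
    show "{w\<in>space M. (\<Sum>j<n. expectation (X j)) + real n * \<epsilon> \<le> (\<Sum>j<n. X j w)} \<in> events"
      unfolding X_def using U A by measurable
  qed
  also have "\<dots> \<le> exp (- 2 * (real n * \<epsilon>)\<^sup>2 / (\<Sum>j<n. (1 - 0)\<^sup>2))"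
    using n \<epsilon> by (intro Hoeffding_ineq_ge) auto
  also have "\<dots> = exp (- 2 * real n * \<epsilon>\<^sup>2)" using n by (simp add: power2_eq_square)
  finally show ?thesis .
qed

text \<open>If the empirical quantile falls below c i, then the empirical frequency of samples of source i
  strictly below c i is at least \<beta>, which Hoeffding's inequality makes unlikely.\<close>
lemma (in prob_space) prob_quantile_min_ecdf_ge:
  fixes U :: "nat \<Rightarrow> nat \<Rightarrow> 'a \<Rightarrow> real" and D :: "nat \<Rightarrow> real measure"
  assumes d: "0 < d" and m: "\<And>i. i < d \<Longrightarrow> 0 < m i" and \<beta>: "0 < \<beta>" "\<beta> \<le> 1" and \<epsilon>: "0 \<le> \<epsilon>"
    and ind: "\<And>i. i < d \<Longrightarrow> indep_vars (\<lambda>_. borel) (U i) {..<m i}"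
    and dist: "\<And>i j. i < d \<Longrightarrow> j < m i \<Longrightarrow> distr M borel (U i j) = D i"
    and c: "\<And>i. i < d \<Longrightarrow> measure (D i) {..<c i} \<le> \<beta> - \<epsilon>"
  shows "1 - (\<Sum>i<d. exp (- 2 * real (m i) * \<epsilon>\<^sup>2))
    \<le> prob {w\<in>space M. \<forall>i<d. c i \<le> quantile \<beta> (min_ecdf d m (\<lambda>i j. U i j w))}"
proof -
  have U[measurable]: "U i j \<in> borel_measurable M" if "i < d" "j < m i" for i j
    using ind[OF that(1)] that(2) unfolding indep_vars_def by auto
  define Bad where "Bad i = {w\<in>space M. real (m i) * \<beta> \<le> (\<Sum>j<m i. indicator {..<c i} (U i j w))}" for i
  have Bad: "Bad i \<in> events" if "i < d" for i
    unfolding Bad_def using U[OF that] by measurable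
  have "space M - (\<Union>i<d. Bad i) \<subseteq> {w\<in>space M. \<forall>i<d. c i \<le> quantile \<beta> (min_ecdf d m (\<lambda>i j. U i j w))}"
  proof (safe, rule ccontr)
    fix w i assume w: "w \<in> space M" "w \<notin> (\<Union>i<d. Bad i)" and i: "i < d"
      and "\<not> c i \<le> quantile \<beta> (min_ecdf d m (\<lambda>i j. U i j w))"
    then have "quantile \<beta> (min_ecdf d m (\<lambda>i j. U i j w)) < c i" by simp
    then obtain q where "q < c i" "\<And>i. i < d \<Longrightarrow> \<beta> \<le> ecdf (m i) (\<lambda>j. U i j w) q"
      using quantile_min_ecdf_less_imp[where m = m, OF d m \<beta>] by blast
    with i have q: "q < c i" "\<beta> \<le> ecdf (m i) (\<lambda>j. U i j w) q" by auto
    have "\<beta> \<le> (1 / real (m i)) * (\<Sum>j<m i. indicator {..<c i} (U i j w))"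
      using q(2) ecdf_le_count_less[OF q(1), of "m i" "\<lambda>j. U i j w"] by (rule order_trans)
    then have "w \<in> Bad i" using w(1) m[OF i] by (simp add: Bad_def field_simps)
    then show False using w(2) i by blast
  qed
  then have "prob (space M - (\<Union>i<d. Bad i))
      \<le> prob {w\<in>space M. \<forall>i<d. c i \<le> quantile \<beta> (min_ecdf d m (\<lambda>i j. U i j w))}"
    using borel_measurable_quantile_min_ecdf[where m = m and U = U, OF d m \<beta> U]
    by (intro finite_measure_mono) measurable
  moreover have "prob (\<Union>i<d. Bad i) \<le> (\<Sum>i<d. exp (- 2 * real (m i) * \<epsilon>\<^sup>2))"
  proof -
    have "prob (\<Union>i<d. Bad i) \<le> (\<Sum>i<d. prob (Bad i))"
      using Bad by (intro finite_measure_subadditive_finite) auto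
    also have "\<dots> \<le> (\<Sum>i<d. exp (- 2 * real (m i) * \<epsilon>\<^sup>2))"
      unfolding Bad_def using m ind dist c \<epsilon> by (intro sum_mono prob_empirical_frequency_ge) auto
    finally show ?thesis .
  qed
  moreover have "prob (space M - (\<Union>i<d. Bad i)) = 1 - prob (\<Union>i<d. Bad i)"
    using Bad by (intro prob_compl) auto
  ultimately show ?thesis by linarith
qed

text \<open>The library's indep_var_distribution_eq needs both random variables to take values in the
  same type.\<close>
lemma (in prob_space) distr_pair_eq_pair_measure_if_indep_set:
  assumes X: "random_variable S X" and Y: "random_variable T Y"
    and indep: "indep_set (sigma_sets (space M) {X -` A \<inter> space M | A. A \<in> sets S})
        (sigma_sets (space M) {Y -` A \<inter> space M | A. A \<in> sets T})"
  shows "distr M S X \<Otimes>\<^sub>M distr M T Y = distr M (S \<Otimes>\<^sub>M T) (\<lambda>w. (X w, Y w))"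
proof (rule pair_measure_eqI)
  show "sigma_finite_measure (distr M S X)" "sigma_finite_measure (distr M T Y)"
    using X Y by (auto intro: prob_space_imp_sigma_finite prob_space_distr)
  show "sets (distr M S X \<Otimes>\<^sub>M distr M T Y) = sets (distr M (S \<Otimes>\<^sub>M T) (\<lambda>w. (X w, Y w)))"
    using sets_pair_measure_cong[of "distr M S X" S "distr M T Y" T] by simp
  fix A B assume "A \<in> sets (distr M S X)" and "B \<in> sets (distr M T Y)"
  then have A: "A \<in> sets S" and B: "B \<in> sets T" by simp_all
  have XY: "random_variable (S \<Otimes>\<^sub>M T) (\<lambda>w. (X w, Y w))" using X Y by measurable
  have XA: "X -` A \<inter> space M \<in> sigma_sets (space M) {X -` A \<inter> space M | A. A \<in> sets S}"
    using A by (intro sigma_sets.Basic) blast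
  have YB: "Y -` B \<inter> space M \<in> sigma_sets (space M) {Y -` A \<inter> space M | A. A \<in> sets T}"
    using B by (intro sigma_sets.Basic) blast
  have "(\<lambda>w. (X w, Y w)) -` (A \<times> B) \<inter> space M = (X -` A \<inter> space M) \<inter> (Y -` B \<inter> space M)"
    by auto
  then have "emeasure (distr M (S \<Otimes>\<^sub>M T) (\<lambda>w. (X w, Y w))) (A \<times> B)
      = ennreal (prob ((X -` A \<inter> space M) \<inter> (Y -` B \<inter> space M)))"
    using A B by (simp add: emeasure_distr[OF XY] emeasure_eq_measure)
  also have "\<dots> = ennreal (prob (X -` A \<inter> space M) * prob (Y -` B \<inter> space M))"
    by (simp add: indep_setD[OF indep XA YB])
  also have "\<dots> = emeasure (distr M S X) A * emeasure (distr M T Y) B"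
    using A B X Y by (simp add: emeasure_distr emeasure_eq_measure ennreal_mult)
  finally show "emeasure (distr M S X) A * emeasure (distr M T Y) B
      = emeasure (distr M (S \<Otimes>\<^sub>M T) (\<lambda>w. (X w, Y w))) (A \<times> B)" ..
qed

lemma (in prob_space) prob_indep_pair_ge:
  assumes X: "random_variable S X" and Y: "random_variable T Y"
    and indep: "indep_set (sigma_sets (space M) {X -` A \<inter> space M | A. A \<in> sets S})
        (sigma_sets (space M) {Y -` A \<inter> space M | A. A \<in> sets T})"
    and C: "C \<in> sets (S \<Otimes>\<^sub>M T)" and G: "G \<in> sets T" and \<gamma>: "0 \<le> \<gamma>"
    and sections: "\<And>y. y \<in> G \<Longrightarrow> \<gamma> \<le> measure (distr M S X) {x. (x, y) \<in> C}"
  shows "\<gamma> * prob (Y -` G \<inter> space M) \<le> prob {w \<in> space M. (X w, Y w) \<in> C}"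
proof -
  let ?PX = "distr M S X" and ?PY = "distr M T Y"
  interpret PX: prob_space ?PX using X by (rule prob_space_distr)
  interpret PY: prob_space ?PY using Y by (rule prob_space_distr)
  interpret PXY: pair_prob_space ?PX ?PY ..
  note joint = distr_pair_eq_pair_measure_if_indep_set[OF X Y indep]
  have XY: "random_variable (S \<Otimes>\<^sub>M T) (\<lambda>w. (X w, Y w))" using X Y by measurable
  have "ennreal (\<gamma> * prob (Y -` G \<inter> space M)) = ennreal \<gamma> * emeasure ?PY G"
    using Y G \<gamma> by (simp add: emeasure_distr emeasure_eq_measure ennreal_mult)
  also have "\<dots> = (\<integral>\<^sup>+y. ennreal \<gamma> * indicator G y \<partial>?PY)"
    using G by (simp add: nn_integral_cmult_indicator)
  also have "\<dots> \<le> (\<integral>\<^sup>+y. emeasure ?PX {x. (x, y) \<in> C} \<partial>?PY)"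
    using sections by (intro nn_integral_mono) (auto simp: indicator_def PX.emeasure_eq_measure)
  also have "\<dots> = emeasure (?PX \<Otimes>\<^sub>M ?PY) C"
    using C by (simp add: PXY.emeasure_pair_measure_alt2 vimage_def)
  also have "\<dots> = emeasure M {w \<in> space M. (X w, Y w) \<in> C}"
    unfolding joint using C XY by (subst emeasure_distr) (auto intro!: arg_cong[where f = "emeasure M"])
  finally show ?thesis by (simp add: emeasure_eq_measure)
qed

section \<open>Coverage\<close>

text \<open>The empirical quantile is a measurable function of the samples, so independence lets us
  integrate the bound on the sections of {(v, y). v \<le> quantile of y} over the good samples.\<close>
lemma (in prob_space) prob_le_quantile_min_ecdf_ge_indep:
  fixes V :: "'a \<Rightarrow> real" and U :: "nat \<Rightarrow> nat \<Rightarrow> 'a \<Rightarrow> real"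
  assumes d: "0 < d" and m: "\<And>i. i < d \<Longrightarrow> 0 < m i" and \<beta>: "0 < \<beta>" "\<beta> \<le> 1"
    and U: "\<And>i j. i < d \<Longrightarrow> j < m i \<Longrightarrow> U i j \<in> borel_measurable M"
    and V: "random_variable borel V"
    and indep: "indep_set (sigma_sets (space M) {V -` A \<inter> space M | A. A \<in> sets borel})
        (sigma_sets (space M) {(\<lambda>w. \<lambda>k\<in>(SIGMA i:{..<d}. {..<m i}). U (fst k) (snd k) w) -` A \<inter> space M
            | A. A \<in> sets (Pi\<^sub>M (SIGMA i:{..<d}. {..<m i}) (\<lambda>_. borel :: real measure))})"
    and \<gamma>: "0 \<le> \<gamma>" and large: "\<And>t. (\<And>i. i < d \<Longrightarrow> c i \<le> t) \<Longrightarrow> \<gamma> \<le> measure (distr M borel V) {..t}"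
  shows "\<gamma> * prob {w \<in> space M. \<forall>i<d. c i \<le> quantile \<beta> (min_ecdf d m (\<lambda>i j. U i j w))}
    \<le> prob {w \<in> space M. V w \<le> quantile \<beta> (min_ecdf d m (\<lambda>i j. U i j w))}"
proof -
  define I where "I = (SIGMA i:{..<d}. {..<m i})"
  define MD where "MD = Pi\<^sub>M I (\<lambda>_. borel :: real measure)"
  define W where "W w = (\<lambda>k\<in>I. U (fst k) (snd k) w)" for w
  define T where "T y = quantile \<beta> (min_ecdf d m (\<lambda>i j. y (i, j)))" for y
  have W[measurable]: "W \<in> measurable M MD"
    unfolding W_def MD_def I_def using U by (intro measurable_restrict) auto
  have T[measurable]: "T \<in> borel_measurable MD"
    unfolding T_def MD_def I_def
    by (rule borel_measurable_quantile_min_ecdf[OF d m \<beta>]) (auto intro: measurable_component_singleton)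
  have TW: "T (W w) = quantile \<beta> (min_ecdf d m (\<lambda>i j. U i j w))" for w
    unfolding T_def W_def I_def by (intro arg_cong[where f = "quantile \<beta>"] min_ecdf_cong) auto
  define G where "G = {y \<in> space MD. \<forall>i<d. c i \<le> T y}"
  define C where "C = {p \<in> space (borel \<Otimes>\<^sub>M MD). fst p \<le> T (snd p)}"
  have "\<gamma> * prob (W -` G \<inter> space M) \<le> prob {w \<in> space M. (V w, W w) \<in> C}"
  proof (rule prob_indep_pair_ge[OF V W _ _ _ \<gamma>])
    show "indep_set (sigma_sets (space M) {V -` A \<inter> space M | A. A \<in> sets borel})
        (sigma_sets (space M) {W -` A \<inter> space M | A. A \<in> sets MD})"
      using indep unfolding W_def MD_def I_def .
    show "C \<in> sets (borel \<Otimes>\<^sub>M MD)" "G \<in> sets MD" unfolding C_def G_def by measurable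
    fix y assume "y \<in> G"
    then have "{x. (x, y) \<in> C} = {..T y}" and "\<And>i. i < d \<Longrightarrow> c i \<le> T y"
      by (auto simp: C_def G_def space_pair_measure)
    then show "\<gamma> \<le> measure (distr M borel V) {x. (x, y) \<in> C}" using large by simp
  qed
  moreover have "W -` G \<inter> space M = {w \<in> space M. \<forall>i<d. c i \<le> quantile \<beta> (min_ecdf d m (\<lambda>i j. U i j w))}"
    using measurable_space[OF W] by (auto simp: G_def TW)
  moreover have "{w \<in> space M. (V w, W w) \<in> C} = {w \<in> space M. V w \<le> quantile \<beta> (min_ecdf d m (\<lambda>i j. U i j w))}"
    using measurable_space[OF W] by (auto simp: C_def space_pair_measure TW)
  ultimately show ?thesis by simp
qed

theorem (in prob_space) prob_le_quantile_min_ecdf_ge: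
  fixes V :: "'a \<Rightarrow> real" and U :: "nat \<Rightarrow> nat \<Rightarrow> 'a \<Rightarrow> real" and D :: "nat \<Rightarrow> real measure"
  assumes f: "fdiv_generator f"
    and d: "0 < d" and m: "\<And>i. i < d \<Longrightarrow> 0 < m i" and \<beta>: "0 < \<beta>" "\<beta> \<le> 1" and \<epsilon>: "0 < \<epsilon>"
    and D: "\<And>i. i < d \<Longrightarrow> real_distribution (D i)"
    and U_ind: "\<And>i. i < d \<Longrightarrow> indep_vars (\<lambda>_. borel) (U i) {..<m i}"
    and U_distr: "\<And>i j. i < d \<Longrightarrow> j < m i \<Longrightarrow> distr M borel (U i j) = D i"
    and V: "random_variable borel V"
    and indep: "indep_set (sigma_sets (space M) {V -` A \<inter> space M | A. A \<in> sets borel})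
        (sigma_sets (space M) {(\<lambda>w. \<lambda>k\<in>(SIGMA i:{..<d}. {..<m i}). U (fst k) (snd k) w) -` A \<inter> space M
            | A. A \<in> sets (Pi\<^sub>M (SIGMA i:{..<d}. {..<m i}) (\<lambda>_. borel :: real measure))})"
    and fin: "(INF Q\<in>convex_hull_meas d D. fdiv f (distr M borel V) Q) \<noteq> \<infinity>"
  shows "(1 - (\<Sum>i<d. exp (- 2 * real (m i) * \<epsilon>\<^sup>2)))
      * g_fun f (real_of_ereal (INF Q\<in>convex_hull_meas d D. fdiv f (distr M borel V) Q)) (\<beta> - \<epsilon>)
    \<le> prob {w \<in> space M. V w \<le> quantile \<beta> (min_ecdf d m (\<lambda>i j. U i j w))}"
proof -
  define P where "P = distr M borel V"
  define \<rho> where "\<rho> = (INF Q\<in>convex_hull_meas d D. fdiv f P Q)"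
  define \<gamma> where "\<gamma> = g_fun f (real_of_ereal \<rho>) (\<beta> - \<epsilon>)"
  have P: "real_distribution P" unfolding P_def using V by simp
  have "0 \<le> \<rho>" unfolding \<rho>_def by (rule INF_fdiv_convex_hull_meas_nonneg[OF f P D])
  then have r0: "0 \<le> real_of_ereal \<rho>" by (simp add: real_of_ereal_pos)
  have \<gamma>: "0 \<le> \<gamma>" unfolding \<gamma>_def using \<beta> \<epsilon> by (intro g_fun_nonneg[OF f r0]) auto
  show ?thesis
  proof (cases "\<beta> - \<epsilon> \<le> 0")
    case True
    then show ?thesis using g_fun_nonpos[OF f r0] unfolding P_def[symmetric] \<rho>_def[symmetric] by simp
  next
    case False
    then have \<beta>': "0 < \<beta> - \<epsilon>" "\<beta> - \<epsilon> < 1" using \<beta> \<epsilon> by auto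
    have "\<exists>c. \<beta> - \<epsilon> \<le> measure (D i) {..c} \<and> measure (D i) {..<c} \<le> \<beta> - \<epsilon>" if i: "i < d" for i
      by (rule real_distribution.cdf_crossing[OF D[OF i] \<beta>']) blast
    then obtain c where c: "\<And>i. i < d \<Longrightarrow> \<beta> - \<epsilon> \<le> measure (D i) {..c i}"
      "\<And>i. i < d \<Longrightarrow> measure (D i) {..<c i} \<le> \<beta> - \<epsilon>" by metis
    have U: "U i j \<in> borel_measurable M" if "i < d" "j < m i" for i j
      using U_ind[OF that(1)] that(2) unfolding indep_vars_def by auto
    have large: "\<gamma> \<le> measure P {..t}" if t: "\<And>i. i < d \<Longrightarrow> c i \<le> t" for t
    proof -
      have "\<beta> - \<epsilon> \<le> measure (D i) {..t}" if i: "i < d" for i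
      proof -
        interpret Di: real_distribution "D i" using D[OF i] .
        have "measure (D i) {..c i} \<le> measure (D i) {..t}"
          using t[OF i] by (intro Di.finite_measure_mono) auto
        with c(1)[OF i] show ?thesis by simp
      qed
      then show ?thesis
        unfolding \<gamma>_def \<rho>_def using \<beta>' by (intro g_fun_INF_fdiv_le_measure[OF f P D fin[folded P_def]]) auto
    qed
    have "(1 - (\<Sum>i<d. exp (- 2 * real (m i) * \<epsilon>\<^sup>2))) * \<gamma>
        \<le> prob {w \<in> space M. \<forall>i<d. c i \<le> quantile \<beta> (min_ecdf d m (\<lambda>i j. U i j w))} * \<gamma>"
      using prob_quantile_min_ecdf_ge[OF d m \<beta> less_imp_le[OF \<epsilon>] U_ind U_distr c(2)] \<gamma>
      by (rule mult_right_mono)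
    also have "\<dots> \<le> prob {w \<in> space M. V w \<le> quantile \<beta> (min_ecdf d m (\<lambda>i j. U i j w))}"
      using prob_le_quantile_min_ecdf_ge_indep[OF d m \<beta> U V indep \<gamma>] large unfolding P_def
      by (simp add: mult.commute)
    finally show ?thesis unfolding \<gamma>_def \<rho>_def P_def .
  qed
qed

lemma (in prob_space)
  assumes s: "s \<in> borel_measurable N" and S: "\<And>i. i < d \<Longrightarrow> prob_space (S i) \<and> sets (S i) = sets N"
    and Z_meas: "\<And>i j. i < d \<Longrightarrow> j < m i \<Longrightarrow> Z i j \<in> measurable M N"
    and Z_distr: "\<And>i j. i < d \<Longrightarrow> j < m i \<Longrightarrow> distr M N (Z i j) = S i"
    and Z_indep: "\<And>i. i < d \<Longrightarrow> indep_vars (\<lambda>_. N) (Z i) {..<m i}"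
  shows real_distribution_distr_score: "\<And>i. i < d \<Longrightarrow> real_distribution (distr (S i) borel s)"
    and indep_vars_score: "\<And>i. i < d \<Longrightarrow> indep_vars (\<lambda>_. borel) (\<lambda>j w. s (Z i j w)) {..<m i}"
    and distr_score:
      "\<And>i j. i < d \<Longrightarrow> j < m i \<Longrightarrow> distr M borel (\<lambda>w. s (Z i j w)) = distr (S i) borel s"
proof -
  fix i assume i: "i < d"
  have "s \<in> borel_measurable (S i)" using s by (simp add: measurable_cong_sets[OF conjunct2[OF S[OF i]] refl])
  then show "real_distribution (distr (S i) borel s)" using S[OF i] by (simp add: prob_space.real_distribution_distr)
  show "indep_vars (\<lambda>_. borel) (\<lambda>j w. s (Z i j w)) {..<m i}"
    using indep_vars_compose2[OF Z_indep[OF i], of "\<lambda>_. s"] s by simp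
  fix j assume j: "j < m i"
  have "distr M borel (\<lambda>w. s (Z i j w)) = distr (distr M N (Z i j)) borel s"
    using Z_meas[OF i j] s by (subst distr_distr) (auto simp: comp_def)
  then show "distr M borel (\<lambda>w. s (Z i j w)) = distr (S i) borel s" unfolding Z_distr[OF i j] .
qed

lemma
  assumes "P \<in> ambiguity_set f \<rho> d Ms"
  shows ambiguity_set_INF_fdiv_le: "(INF Q\<in>convex_hull_meas d Ms. fdiv f P Q) \<le> ereal \<rho>"
    and ambiguity_set_sources_nonempty: "0 < d"
proof -
  obtain Q0 where Q0: "Q0 \<in> convex_hull_meas d Ms" "fdiv f P Q0 \<le> ereal \<rho>"
    using assms unfolding ambiguity_set_def by blast
  show "(INF Q\<in>convex_hull_meas d Ms. fdiv f P Q) \<le> ereal \<rho>"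
    using INF_lower[OF Q0(1), of "fdiv f P"] Q0(2) by (rule order_trans)
  show "0 < d" using Q0(1) by (rule convex_hull_measE) (cases d, auto)
qed

theorem theorem8:
  fixes M :: "'w measure" and MX :: "'x measure" and MY :: "'y measure"
    and s :: "'x \<times> 'y \<Rightarrow> real"
    and d :: nat and S :: "nat \<Rightarrow> ('x \<times> 'y) measure" and m :: "nat \<Rightarrow> nat"
    and Z :: "nat \<Rightarrow> nat \<Rightarrow> 'w \<Rightarrow> 'x \<times> 'y"
    and Xt :: "'w \<Rightarrow> 'x" and Yt :: "'w \<Rightarrow> 'y"
    and P :: "real measure"
    and f :: "real \<Rightarrow> ereal" and \<rho> \<alpha> \<epsilon> :: real
  assumes M: "prob_space M"
    and s_meas: "s \<in> borel_measurable (MX \<Otimes>\<^sub>M MY)"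
    and S: "\<And>i. i < d \<Longrightarrow> prob_space (S i) \<and> sets (S i) = sets (MX \<Otimes>\<^sub>M MY)"
    and f: "fdiv_generator f"
    and \<rho>: "\<rho> > 0" and \<alpha>: "0 < \<alpha>" "\<alpha> < 1"
    and m: "\<And>i. i < d \<Longrightarrow> m i > 0"
    and Z_meas: "\<And>i j. i < d \<Longrightarrow> j < m i \<Longrightarrow> Z i j \<in> measurable M (MX \<Otimes>\<^sub>M MY)"
    and Z_distr: "\<And>i j. i < d \<Longrightarrow> j < m i \<Longrightarrow> distr M (MX \<Otimes>\<^sub>M MY) (Z i j) = S i"
    and Z_indep: "\<And>i. i < d \<Longrightarrow> prob_space.indep_vars M (\<lambda>_. MX \<Otimes>\<^sub>M MY) (Z i) {..<m i}"
    and Xt_meas: "Xt \<in> measurable M MX" and Yt_meas: "Yt \<in> measurable M MY"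
    and P_distr: "distr M borel (\<lambda>w. s (Xt w, Yt w)) = P"
    and P_amb: "P \<in> ambiguity_set f \<rho> d (\<lambda>i. distr (S i) borel s)"
    and test_indep: "prob_space.indep_set M
        (sigma_sets (space M) {(\<lambda>w. s (Xt w, Yt w)) -` A \<inter> space M | A. A \<in> sets borel})
        (sigma_sets (space M) {(\<lambda>w. \<lambda>k\<in>(SIGMA i:{..<d}. {..<m i}). s (Z (fst k) (snd k) w)) -` A \<inter> space M
            | A. A \<in> sets (Pi\<^sub>M (SIGMA i:{..<d}. {..<m i}) (\<lambda>_. borel :: real measure))})"
    and \<epsilon>: "\<epsilon> > 0"
  shows
    "let V = (\<lambda>i j w. s (Z i j w));
         Fhat = (\<lambda>i w x. (1 / real (m i)) * (\<Sum>j<m i. indicator {..x} (V i j w)));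
         Fmin = (\<lambda>w x. Min ((\<lambda>i. Fhat i w x) ` {..<d}));
         \<rho>star = (INF P0\<in>convex_hull_meas d (\<lambda>i. distr (S i) borel s). fdiv f P P0);
         t = (\<lambda>w. quantile (g_inv f \<rho> (1 - \<alpha>)) (Fmin w))
     in measure M {w \<in> space M. Yt w \<in> conf_set (space MY) s (t w) (Xt w)}
        \<ge> (1 - 2 * (\<Sum>i<d. exp (- 2 * real (m i) * \<epsilon>\<^sup>2)))
            * g_fun f (real_of_ereal \<rho>star) (g_inv f \<rho> (1 - \<alpha>) - \<epsilon>)"
proof -
  interpret prob_space M by (rule M)
  define \<beta> where "\<beta> = g_inv f \<rho> (1 - \<alpha>)"
  define E where "E = (\<Sum>i<d. exp (- 2 * real (m i) * \<epsilon>\<^sup>2))"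
  define \<gamma> where "\<gamma> = g_fun f (real_of_ereal (INF Q\<in>convex_hull_meas d (\<lambda>i. distr (S i) borel s). fdiv f P Q)) (\<beta> - \<epsilon>)"
  note D = real_distribution_distr_score[OF s_meas S Z_meas Z_distr Z_indep]
  note U_ind = indep_vars_score[OF s_meas S Z_meas Z_distr Z_indep]
  note U_distr = distr_score[OF s_meas S Z_meas Z_distr Z_indep]
  have V: "random_variable borel (\<lambda>w. s (Xt w, Yt w))" using Xt_meas Yt_meas s_meas by measurable
  have d: "0 < d" using P_amb by (rule ambiguity_set_sources_nonempty)
  have fin: "(INF Q\<in>convex_hull_meas d (\<lambda>i. distr (S i) borel s).
      fdiv f (distr M borel (\<lambda>w. s (Xt w, Yt w))) Q) \<noteq> \<infinity>"
    using ambiguity_set_INF_fdiv_le[OF P_amb] unfolding P_distr by auto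
  have \<beta>: "0 < \<beta>" "\<beta> \<le> 1"
    using g_inv_ge[OF f, of \<rho> "1 - \<alpha>"] g_inv_le_one[OF f, of \<rho> "1 - \<alpha>"] \<rho> \<alpha> unfolding \<beta>_def by auto
  have cover: "(1 - E) * \<gamma> \<le> prob {w \<in> space M. s (Xt w, Yt w) \<le> quantile \<beta> (min_ecdf d m (\<lambda>i j. s (Z i j w)))}"
    unfolding E_def \<gamma>_def P_distr[symmetric]
    by (rule prob_le_quantile_min_ecdf_ge) (use f d m \<beta> \<epsilon> D U_ind U_distr V test_indep fin in auto)
  have "0 \<le> \<gamma>" unfolding \<gamma>_def using \<beta> \<epsilon> D P_distr V
    by (intro g_fun_nonneg[OF f] real_of_ereal_pos INF_fdiv_convex_hull_meas_nonneg[OF f]) auto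
  moreover have "0 \<le> E" unfolding E_def by (intro sum_nonneg) auto
  ultimately have "(1 - 2 * E) * \<gamma> \<le> (1 - E) * \<gamma>" by (intro mult_right_mono) auto
  with cover have bound: "(1 - 2 * E) * \<gamma>
      \<le> prob {w \<in> space M. s (Xt w, Yt w) \<le> quantile \<beta> (min_ecdf d m (\<lambda>i j. s (Z i j w)))}"
    by linarith
  have Fmin: "(\<lambda>x. Min ((\<lambda>i. (1 / real (m i)) * (\<Sum>j<m i. indicator {..x} (s (Z i j w)))) ` {..<d}))
      = min_ecdf d m (\<lambda>i j. s (Z i j w))" for w
    by (simp add: fun_eq_iff min_ecdf_def ecdf_def)
  have conf_set: "Yt w \<in> conf_set (space MY) s t (Xt w) \<longleftrightarrow> s (Xt w, Yt w) \<le> t" if "w \<in> space M" for w t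
    using measurable_space[OF Yt_meas that] by (simp add: conf_set_def)
  show ?thesis
    unfolding Let_def Fmin \<beta>_def[symmetric] E_def[symmetric] \<gamma>_def[symmetric]
    using bound by (simp add: conf_set cong: conj_cong)
qed

end
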